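(* Let $C_1,C_2,\gamma$ be positive real numbers and let $(t_n)_{n\ge1}$ be a sequence of real numbers with $C_1n^\gamma\le t_n\le C_2 n^\gamma$ for all $n\ge1$. Then there exist a constant $C>0$ and an integer $n_0\ge 2$ such that the set $$\bigcap_{n\ge n_0}\Bigl\{\xi\in\mathbb{R}:\ \|\xi t_n\|>\frac{C}{n\log n}\Bigr\}$$ has Hausdorff dimension $1$.
   Context: For a real number $x$, $\|x\|$ denotes the distance from $x$ to the nearest integer. *)

theory Defs
  imports "HOL-Analysis.Analysis"
begin

definition dist_int :: "real \<Rightarrow> real" where
  "dist_int x = \<bar>x - of_int (round x)\<bar>"

definition hausdorff_pre :: "real \<Rightarrow> real \<Rightarrow> real set \<Rightarrow> ennreal" where
  "hausdorff_pre s \<delta> A =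
     (INF U \<in> {U :: nat \<Rightarrow> real set. A \<subseteq> (\<Union>i. U i) \<and>
                   (\<forall>i. bounded (U i) \<and> diameter (U i) \<le> \<delta>)}.
        (\<Sum>i. ennreal (diameter (U i) powr s)))"

text \<open>s-dimensional Hausdorff outer measure (limit as delta tends to 0, which is a supremum).\<close>
definition hausdorff_measure :: "real \<Rightarrow> real set \<Rightarrow> ennreal" where
  "hausdorff_measure s A = (SUP \<delta> \<in> {0<..}. hausdorff_pre s \<delta> A)"

definition hausdorff_dim :: "real set \<Rightarrow> real" where
  "hausdorff_dim A = Inf {s. 0 < s \<and> hausdorff_measure s A = 0}"

end

theory Submission
  imports Defs "HOL-Real_Asymp.Real_Asymp"
begin

text \<open>
  Upper bound: every set of reals has \<open>s\<close>-dimensional Hausdorff measure zero for \<open>s > 1\<close>, since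
  the real line is covered by intervals of lengths \<open>c/(n+1)\<close>.

  Lower bound, a Cantor-type construction carried out in the locale \<open>construction\<close>.  The indices
  \<open>n\<close> are grouped into blocks \<open>[N (L-1), N L)\<close> with \<open>N j = 2^(a D^j)\<close>, and at level \<open>k\<close> the unit
  interval is cut into \<open>grid k = 2^(E a (D^k - 1))\<close> cells.  A cell of level \<open>L\<close> is good if it avoids
  the forbidden zones \<open>{\<xi>. \<parallel>\<xi> t n\<parallel> \<le> eps n}\<close> of all \<open>n\<close> in block \<open>L\<close>.  As the zones of one block
  have total relative size at most \<open>12/768\<close> (the sum of \<open>1/(n ln n)\<close> over a block is at most
  \<open>ln (2D)\<close>), at most \<open>1/64\<close> of the grandchildren of any cell are bad; by Markov's inequality
  every selected cell can therefore choose \<open>branch k / 8\<close> of its children with even index that are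
  good and again have few bad children.  The points all of whose cells are selected form a Cantor set
  inside \<open>A\<close>.  Reading the ranks of the chosen cells as digits gives a map \<open>phi\<close> from the Cantor set
  onto \<open>[0, 1)\<close>, which is Hoelder continuous with every exponent \<open>s < 1\<close> because the grids grow much
  faster than the number of chosen cells.  By the mass distribution principle the Hausdorff measure of
  \<open>A\<close> in dimension \<open>s < 1\<close> is at least \<open>1/2\<close>.
\<close>

section \<open>Hausdorff measure and dimension of sets of reals\<close>

lemma hausdorff_pre_le_measure:
  assumes "\<delta> > 0"
  shows "hausdorff_pre s \<delta> A \<le> hausdorff_measure s A"
  unfolding hausdorff_measure_def by (rule SUP_upper) (use assms in simp)

lemma hausdorff_measure_eq_0_if_small_covers:
  assumes "\<And>\<delta> \<eta>. \<delta> > 0 \<Longrightarrow> \<eta> > 0 \<Longrightarrow> \<exists>U. A \<subseteq> (\<Union>i. U i) \<and>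
             (\<forall>i. bounded (U i) \<and> diameter (U i) \<le> \<delta>) \<and>
             (\<Sum>i. ennreal (diameter (U i) powr s)) \<le> ennreal \<eta>"
  shows "hausdorff_measure s A = 0"
proof -
  have "hausdorff_pre s \<delta> A = 0" if "\<delta> > 0" for \<delta>
  proof -
    have "hausdorff_pre s \<delta> A \<le> 0 + ennreal \<eta>" if "\<eta> > 0" for \<eta>
    proof -
      obtain U where "A \<subseteq> (\<Union>i. U i)" "\<forall>i. bounded (U i) \<and> diameter (U i) \<le> \<delta>"
          and small: "(\<Sum>i. ennreal (diameter (U i) powr s)) \<le> ennreal \<eta>"
        using assms[OF \<open>\<delta> > 0\<close> \<open>\<eta> > 0\<close>] by blast
      then have "hausdorff_pre s \<delta> A \<le> (\<Sum>i. ennreal (diameter (U i) powr s))"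
        unfolding hausdorff_pre_def by (intro INF_lower) auto
      then show ?thesis using small by simp
    qed
    then have "hausdorff_pre s \<delta> A \<le> 0" by (rule ennreal_le_epsilon)
    then show ?thesis by simp
  qed
  then show ?thesis unfolding hausdorff_measure_def by simp
qed

text \<open>A point \<open>x \<ge> 0\<close> lies between two consecutive partial sums of a sequence whose partial sums
  are unbounded: take the first partial sum exceeding \<open>x\<close>.\<close>
lemma partial_sums_cover:
  fixes f :: "nat \<Rightarrow> real"
  assumes unbounded: "\<And>B. \<exists>n. B < sum f {..<n}" and "x \<ge> 0"
  shows "\<exists>i. sum f {..<i} \<le> x \<and> x \<le> sum f {..<Suc i}"
proof -
  obtain n where n: "x < sum f {..<n}" using unbounded by blast
  define j where "j = (LEAST j. x < sum f {..<j})"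
  have j: "x < sum f {..<j}" unfolding j_def by (rule LeastI[of _ n]) (rule n)
  then obtain i where i: "j = Suc i" using \<open>x \<ge> 0\<close> by (cases j) auto
  have "\<not> x < sum f {..<i}"
    using Least_le[of "\<lambda>j. x < sum f {..<j}" i] i by (auto simp: j_def)
  then show ?thesis using j i by (intro exI[of _ i]) auto
qed

lemma harmonic_minorant_unbounded:
  fixes f :: "nat \<Rightarrow> real"
  assumes "c > 0" and "\<And>j. c / real (Suc j) \<le> f j"
  shows "\<exists>n. B < sum f {..<n}"
proof -
  have "eventually (\<lambda>n. B / c < harm n) sequentially"
    using harm_at_top by (simp add: filterlim_at_top_dense)
  then obtain n where n: "B / c < harm n" by (auto simp: eventually_sequentially)
  have "c * harm n = (\<Sum>j<n. c / real (Suc j))"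
    by (simp add: harm_altdef sum_distrib_left divide_inverse)
  also have "\<dots> \<le> sum f {..<n}" by (intro sum_mono assms(2))
  finally show ?thesis using n \<open>c > 0\<close> by (intro exI[of _ n]) (simp add: field_simps)
qed

text \<open>Intervals of prescribed lengths, laid end to end alternately to the right and to the left
  of \<open>0\<close>, cover the real line provided both subsequences of lengths dominate a harmonic series.\<close>
lemma intervals_of_given_lengths_cover:
  fixes len :: "nat \<Rightarrow> real"
  assumes nonneg: "\<And>n. len n \<ge> 0" and "c > 0"
    and harmonic: "\<And>j. c / real (Suc j) \<le> len (2*j)" "\<And>j. c / real (Suc j) \<le> len (Suc (2*j))"
  obtains U :: "nat \<Rightarrow> real set"
  where "(UNIV :: real set) \<subseteq> (\<Union>n. U n)" "\<And>n. bounded (U n)" "\<And>n. diameter (U n) = len n"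
proof -
  define R where "R i = (\<Sum>j<i. len (2*j))" for i
  define L where "L i = (\<Sum>j<i. len (Suc (2*j)))" for i
  define U where "U n = (if even n then {R (n div 2) .. R (Suc (n div 2))}
                        else {- L (Suc (n div 2)) .. - L (n div 2)})" for n
  have "diameter (U n) = len n" for n
  proof (cases "even n")
    case True
    then obtain i where "n = 2*i" by auto
    then show ?thesis using nonneg[of n] by (simp add: U_def R_def)
  next
    case False
    then obtain i where "n = Suc (2*i)" by (metis oddE Suc_eq_plus1)
    then show ?thesis using nonneg[of n] by (simp add: U_def L_def)
  qed
  moreover have "x \<in> (\<Union>n. U n)" for x :: real
  proof (cases "x \<ge> 0")
    case True
    obtain i where "R i \<le> x" "x \<le> R (Suc i)"
      using partial_sums_cover[OF harmonic_minorant_unbounded[OF \<open>c > 0\<close> harmonic(1)] True]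
      unfolding R_def by blast
    then have "x \<in> U (2*i)" by (simp add: U_def)
    then show ?thesis by blast
  next
    case False
    obtain i where "L i \<le> -x" "-x \<le> L (Suc i)"
      using partial_sums_cover[OF harmonic_minorant_unbounded[OF \<open>c > 0\<close> harmonic(2)], of "-x"] False
      unfolding L_def by force
    then have "x \<in> U (Suc (2*i))" by (simp add: U_def)
    then show ?thesis by blast
  qed
  moreover have "bounded (U n)" for n by (simp add: U_def)
  ultimately show ?thesis using that by blast
qed

text \<open>For \<open>s > 1\<close> the real line has covers by sets of small diameter with arbitrarily small
  \<open>s\<close>-dimensional size: take lengths \<open>c/(n+1)\<close>, whose \<open>s\<close>-th powers sum to \<open>O(c)\<close>.\<close>
lemma real_line_small_covers:
  assumes "s > 1" "\<delta> > 0" "\<eta> > 0"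
  shows "\<exists>U. (UNIV :: real set) \<subseteq> (\<Union>i. U i) \<and> (\<forall>i. bounded (U i) \<and> diameter (U i) \<le> \<delta>) \<and>
             (\<Sum>i. ennreal (diameter (U i) powr s)) \<le> ennreal \<eta>"
proof -
  define g where "g n = real (Suc n) powr (-s)" for n
  have "summable (\<lambda>n. real n powr (-s))" using assms(1) by (simp add: summable_real_powr_iff)
  then have g_summable: "summable g"
    unfolding g_def using summable_Suc_iff[of "\<lambda>n. real n powr (-s)"] by simp
  define Z where "Z = suminf g"
  have "Z \<ge> 0" unfolding Z_def g_def by (rule suminf_nonneg[OF g_summable[unfolded g_def]]) simp
  define c where "c = min \<delta> (min 1 (\<eta> / (Z + 1)))"
  have c: "c > 0" "c \<le> 1" "c \<le> \<delta>" "c \<le> \<eta> / (Z + 1)"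
    unfolding c_def using assms \<open>Z \<ge> 0\<close> by auto
  define len where "len n = c / real (Suc n)" for n
  obtain U where cover: "(UNIV :: real set) \<subseteq> (\<Union>n. U n)" and "\<And>n. bounded (U n)"
      and diam_U: "\<And>n. diameter (U n) = len n"
    by (rule intervals_of_given_lengths_cover[of len "c/2"]) (use c in \<open>auto simp: len_def field_simps\<close>)
  have len_powr: "len n powr s \<le> c * g n" for n
  proof -
    have "len n powr s = c powr s * g n"
      using c by (simp add: len_def g_def powr_divide powr_minus_divide)
    also have "\<dots> \<le> c * g n"
      using c assms(1) by (intro mult_right_mono powr_le_one_le) (auto simp: g_def)
    finally show ?thesis .
  qed
  have len_summable: "summable (\<lambda>n. len n powr s)"
    by (rule summable_comparison_test[of _ "\<lambda>n. c * g n"]) (use len_powr g_summable in auto)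
  have "(\<Sum>n. len n powr s) \<le> (\<Sum>n. c * g n)"
    by (rule suminf_le[OF len_powr len_summable]) (use g_summable in simp)
  also have "\<dots> = c * Z" unfolding Z_def by (rule suminf_mult[OF g_summable])
  also have "\<dots> \<le> \<eta> / (Z + 1) * Z" using c \<open>Z \<ge> 0\<close> by (intro mult_right_mono) auto
  also have "\<dots> \<le> \<eta>" using \<open>Z \<ge> 0\<close> assms(3) by (simp add: field_simps)
  finally have "ennreal (\<Sum>n. len n powr s) \<le> ennreal \<eta>" by (rule ennreal_leI)
  moreover have "(\<Sum>n. ennreal (diameter (U n) powr s)) = ennreal (\<Sum>n. len n powr s)"
    unfolding diam_U by (rule suminf_ennreal2[OF _ len_summable]) simp
  moreover have "diameter (U n) \<le> \<delta>" for n
  proof -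
    have "len n \<le> c" unfolding len_def using c by (simp add: field_simps)
    then show ?thesis using c(3) diam_U[of n] by simp
  qed
  ultimately show ?thesis using cover \<open>\<And>n. bounded (U n)\<close> by (intro exI[of _ U]) auto
qed

lemma hausdorff_measure_gt_1_eq_0:
  fixes A :: "real set"
  assumes "s > 1"
  shows "hausdorff_measure s A = 0"
proof (rule hausdorff_measure_eq_0_if_small_covers)
  fix \<delta> \<eta> :: real assume "\<delta> > 0" "\<eta> > 0"
  then obtain U where "(UNIV :: real set) \<subseteq> (\<Union>i. U i)"
      and "\<forall>i. bounded (U i) \<and> diameter (U i) \<le> \<delta>" "(\<Sum>i. ennreal (diameter (U i) powr s)) \<le> ennreal \<eta>"
    using real_line_small_covers[OF assms] by meson
  then show "\<exists>U. A \<subseteq> (\<Union>i. U i) \<and> (\<forall>i. bounded (U i) \<and> diameter (U i) \<le> \<delta>) \<and>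
               (\<Sum>i. ennreal (diameter (U i) powr s)) \<le> ennreal \<eta>"
    by (intro exI[of _ U]) auto
qed

lemma ennreal_half_times_2: "ennreal (1/2) * 2 = 1"
proof -
  have "ennreal (1/2) * ennreal 2 = ennreal (1/2 * 2)" by (rule ennreal_mult[symmetric]) auto
  then show ?thesis by simp
qed

text \<open>Mass distribution principle in the form needed here: if a locally Hoelder map of exponent
  \<open>s\<close> (on scales below \<open>\<rho>\<close>) sends a subset \<open>K\<close> of \<open>A\<close> onto \<open>[0, 1)\<close>, then every cover of \<open>A\<close>
  by sets of diameter at most \<open>\<rho>/2\<close> has \<open>s\<close>-dimensional size at least \<open>1/2\<close>, because the images
  of the covering sets meeting \<open>K\<close> lie in intervals of length \<open>2 diam^s\<close> covering \<open>[0, 1)\<close>.\<close>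
lemma holder_onto_cover_size:
  fixes K A :: "real set" and f :: "real \<Rightarrow> real" and U :: "nat \<Rightarrow> real set"
  assumes "s > 0" and "K \<subseteq> A" and onto: "{0..<1} \<subseteq> f ` K"
    and holder: "\<And>x y. x \<in> K \<Longrightarrow> y \<in> K \<Longrightarrow> \<bar>x - y\<bar> < \<rho> \<Longrightarrow> \<bar>f x - f y\<bar> \<le> \<bar>x - y\<bar> powr s"
    and cover: "A \<subseteq> (\<Union>i. U i)" and small: "\<forall>i. bounded (U i) \<and> diameter (U i) \<le> \<rho>/2" and "\<rho> > 0"
  shows "ennreal (1/2) \<le> (\<Sum>i. ennreal (diameter (U i) powr s))"
proof -
  define r where "r i = diameter (U i) powr s" for i
  define u where "u i = (SOME u. u \<in> U i \<inter> K)" for i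
  define I where "I i = (if U i \<inter> K = {} then {} else {f (u i) - r i .. f (u i) + r i})" for i
  have r_nonneg: "r i \<ge> 0" for i unfolding r_def by simp
  have "{0..<1} \<subseteq> (\<Union>i. I i)"
  proof
    fix z :: real assume "z \<in> {0..<1}"
    then obtain x where x: "x \<in> K" "f x = z" using onto by auto
    then obtain i where "x \<in> U i" using cover \<open>K \<subseteq> A\<close> by blast
    then have meets: "U i \<inter> K \<noteq> {}" using x by blast
    then have u: "u i \<in> U i \<inter> K" unfolding u_def by (metis some_in_eq)
    have dist: "\<bar>x - u i\<bar> \<le> diameter (U i)"
      using diameter_bounded_bound[of "U i" x "u i"] small \<open>x \<in> U i\<close> u by (simp add: dist_real_def)
    moreover have "diameter (U i) < \<rho>" using small[THEN spec, of i] \<open>\<rho> > 0\<close> by linarith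
    ultimately have "\<bar>x - u i\<bar> < \<rho>" by linarith
    then have "\<bar>f x - f (u i)\<bar> \<le> \<bar>x - u i\<bar> powr s" using holder x(1) u by blast
    also have "\<dots> \<le> r i" unfolding r_def using dist \<open>s > 0\<close> by (intro powr_mono2) auto
    finally show "z \<in> (\<Union>i. I i)" using meets x by (auto simp: I_def abs_le_iff)
  qed
  then have "emeasure lborel {0..<(1::real)} \<le> emeasure lborel (\<Union>i. I i)"
    by (intro emeasure_mono) (auto simp: I_def)
  also have "\<dots> \<le> (\<Sum>i. emeasure lborel (I i))"
    by (rule emeasure_subadditive_countably) (auto simp: I_def)
  also have "\<dots> \<le> (\<Sum>i. ennreal 2 * ennreal (r i))"
  proof (intro suminf_le allI)
    fix i
    have "emeasure lborel (I i) \<le> ennreal (2 * r i)" using r_nonneg[of i] by (simp add: I_def)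
    then show "emeasure lborel (I i) \<le> ennreal 2 * ennreal (r i)"
      using ennreal_mult[of 2 "r i"] r_nonneg[of i] by simp
  qed auto
  also have "\<dots> = 2 * (\<Sum>i. ennreal (r i))" by simp
  finally have "1 \<le> 2 * (\<Sum>i. ennreal (r i))" by simp
  then have "ennreal (1/2) * 1 \<le> ennreal (1/2) * (2 * (\<Sum>i. ennreal (r i)))"
    by (rule mult_left_mono) simp
  then show ?thesis by (simp only: mult.assoc[symmetric] ennreal_half_times_2 mult_1 mult_1_right r_def)
qed

lemma hausdorff_measure_ge_half_if_holder_onto:
  fixes K A :: "real set" and f :: "real \<Rightarrow> real"
  assumes "s > 0" and "\<rho> > 0" and "K \<subseteq> A" and "{0..<1} \<subseteq> f ` K"
    and "\<And>x y. x \<in> K \<Longrightarrow> y \<in> K \<Longrightarrow> \<bar>x - y\<bar> < \<rho> \<Longrightarrow> \<bar>f x - f y\<bar> \<le> \<bar>x - y\<bar> powr s"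
  shows "ennreal (1/2) \<le> hausdorff_measure s A"
proof -
  have "ennreal (1/2) \<le> hausdorff_pre s (\<rho>/2) A"
    unfolding hausdorff_pre_def
  proof (rule INF_greatest)
    fix U :: "nat \<Rightarrow> real set" assume "U \<in> {U. A \<subseteq> (\<Union>i. U i) \<and> (\<forall>i. bounded (U i) \<and> diameter (U i) \<le> \<rho>/2)}"
    then have "A \<subseteq> (\<Union>i. U i)" "\<forall>i. bounded (U i) \<and> diameter (U i) \<le> \<rho>/2" by auto
    then show "ennreal (1/2) \<le> (\<Sum>i. ennreal (diameter (U i) powr s))"
      using holder_onto_cover_size[OF assms(1,3-5)] assms(2) by blast
  qed
  also have "\<dots> \<le> hausdorff_measure s A" by (rule hausdorff_pre_le_measure) (use \<open>\<rho> > 0\<close> in simp)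
  finally show ?thesis .
qed

text \<open>A set of reals with nonzero \<open>s\<close>-dimensional measure for every \<open>s < 1\<close> has Hausdorff
  dimension 1; the case \<open>s > 1\<close> holds for every set.\<close>
lemma hausdorff_dim_eq_1:
  fixes A :: "real set"
  assumes "\<And>s. 0 < s \<Longrightarrow> s < 1 \<Longrightarrow> hausdorff_measure s A \<noteq> 0"
  shows "hausdorff_dim A = 1"
proof -
  define Z where "Z = {s. 0 < s \<and> hausdorff_measure s A = 0}"
  have ge_1: "s \<ge> 1" if "s \<in> Z" for s using assms that unfolding Z_def by force
  have gt_1: "s \<in> Z" if "s > 1" for s using hausdorff_measure_gt_1_eq_0 that unfolding Z_def by simp
  have "Inf Z = 1"
  proof (rule antisym)
    show "1 \<le> Inf Z" by (rule cInf_greatest) (use gt_1[of 2] ge_1 in auto)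
    have "Inf Z \<le> 1 + \<epsilon>" if "\<epsilon> > 0" for \<epsilon>
      by (rule cInf_lower) (use gt_1 that ge_1 in \<open>auto intro: bdd_belowI[of _ 1]\<close>)
    then show "Inf Z \<le> 1" by (rule field_le_epsilon)
  qed
  then show ?thesis unfolding hausdorff_dim_def Z_def .
qed

lemma card_integers_in_interval:
  fixes a b :: real
  shows "finite {j::int. a \<le> of_int j \<and> of_int j \<le> b}"
    and "real (card {j::int. a \<le> of_int j \<and> of_int j \<le> b}) \<le> max 0 (b - a + 1)"
proof -
  have eq: "{j::int. a \<le> of_int j \<and> of_int j \<le> b} = {\<lceil>a\<rceil>..\<lfloor>b\<rfloor>}"
    by (auto simp: ceiling_le_iff le_floor_iff)
  show "finite {j::int. a \<le> of_int j \<and> of_int j \<le> b}" unfolding eq by simp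
  have "real (card {\<lceil>a\<rceil>..\<lfloor>b\<rfloor>}) \<le> max 0 (b - a + 1)"
  proof (cases "\<lceil>a\<rceil> \<le> \<lfloor>b\<rfloor>")
    case True
    then have "real (card {\<lceil>a\<rceil>..\<lfloor>b\<rfloor>}) = of_int (\<lfloor>b\<rfloor> - \<lceil>a\<rceil> + 1)" by simp
    also have "\<dots> \<le> b - a + 1" using of_int_floor_le[of b] le_of_int_ceiling[of a] by linarith
    finally show ?thesis by simp
  qed simp
  then show "real (card {j::int. a \<le> of_int j \<and> of_int j \<le> b}) \<le> max 0 (b - a + 1)"
    unfolding eq .
qed

lemma card_naturals_in_interval:
  fixes a b :: real
  shows "finite {j::nat. a \<le> real j \<and> real j \<le> b}"
    and "real (card {j::nat. a \<le> real j \<and> real j \<le> b}) \<le> max 0 (b - a + 1)"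
proof -
  let ?Nat = "{j::nat. a \<le> real j \<and> real j \<le> b}" and ?Int = "{j::int. a \<le> of_int j \<and> of_int j \<le> b}"
  have sub: "int ` ?Nat \<subseteq> ?Int" by auto
  have inj: "inj_on int ?Nat" by (simp add: inj_on_def)
  show "finite ?Nat"
    using finite_subset[OF sub card_integers_in_interval(1)] finite_imageD[OF _ inj] by blast
  have "card ?Nat \<le> card ?Int"
    using card_mono[OF card_integers_in_interval(1) sub] card_image[OF inj] by simp
  then show "real (card ?Nat) \<le> max 0 (b - a + 1)"
    using card_integers_in_interval(2)[of a b] by linarith
qed

lemma cell_index_near_integer:
  fixes x t \<epsilon> M :: real and y :: nat and j :: int
  assumes "t > 0" "M > 0" "real y / M \<le> x" "x < (real y + 1) / M" "\<bar>x * t - j\<bar> \<le> \<epsilon>"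
  shows "M * (j - \<epsilon>) / t - 1 \<le> real y" and "real y \<le> M * (j + \<epsilon>) / t"
proof -
  have "(j - \<epsilon>) / t \<le> x" "x \<le> (j + \<epsilon>) / t"
    using assms(1,5) by (simp_all add: field_simps abs_le_iff)
  moreover have "real y \<le> x * M" "x * M < real y + 1" using assms(2-4) by (simp_all add: field_simps)
  ultimately show "M * (j - \<epsilon>) / t - 1 \<le> real y" "real y \<le> M * (j + \<epsilon>) / t"
    using assms(2) by (smt (verit) mult.commute mult_left_mono times_divide_eq_right)+
qed

lemma refined_cell_in_parent_cell:
  fixes K R i y :: nat and x :: real
  assumes "K \<ge> 1" "R \<ge> 1" "i*R \<le> y" "y < (i+1)*R"
    and "real y / (real K * real R) \<le> x" "x < (real y + 1) / (real K * real R)"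
  shows "real i / K \<le> x" and "x < (real i + 1) / K"
proof -
  have KR: "real K * real R > 0" using assms(1,2) by simp
  have "real (i*R) \<le> real y" by (rule of_nat_mono) (rule assms(3))
  moreover have "real (y+1) \<le> real ((i+1)*R)" by (rule of_nat_mono) (use assms(4) in linarith)
  ultimately have "real i * R \<le> real y" "real y + 1 \<le> (real i + 1) * R" by (simp_all add: algebra_simps)
  then have "real i * R / (real K * real R) \<le> real y / (real K * real R)"
      "(real y + 1) / (real K * real R) \<le> (real i + 1) * R / (real K * real R)"
    using KR by (simp_all only: divide_right_mono less_imp_le)
  moreover have "real i * R / (real K * real R) = real i / K"
      "(real i + 1) * R / (real K * real R) = (real i + 1) / K"
    using assms(2) by simp_all
  ultimately show "real i / K \<le> x" "x < (real i + 1) / K" using assms(5,6) by simp_all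
qed

lemma cells_near_integers_subset:
  fixes t \<epsilon> :: real and K R i :: nat
  assumes t: "t > 0" and "K \<ge> 1" "R \<ge> 1"
  defines "M \<equiv> real K * real R"
  shows "{y \<in> {i*R..<(i+1)*R}. \<exists>x. real y / (K*R) \<le> x \<and> x < (real y + 1) / (K*R) \<and> dist_int (x * t) \<le> \<epsilon>}
    \<subseteq> (\<Union>j\<in>{j::int. t*i/K - \<epsilon> \<le> of_int j \<and> of_int j \<le> t*(i+1)/K + \<epsilon>}.
          {y::nat. M*(j-\<epsilon>)/t - 1 \<le> real y \<and> real y \<le> M*(j+\<epsilon>)/t})"
proof
  fix y assume "y \<in> {y \<in> {i*R..<(i+1)*R}. \<exists>x. real y / (K*R) \<le> x \<and> x < (real y + 1) / (K*R) \<and>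
                                 dist_int (x * t) \<le> \<epsilon>}"
  then obtain x where y: "i*R \<le> y" "y < (i+1)*R"
      and x: "real y/M \<le> x" "x < (real y+1)/M" "dist_int (x*t) \<le> \<epsilon>"
    by (auto simp: M_def)
  have M: "M > 0" using assms(2,3) by (simp add: M_def)
  define j where "j = round (x*t)"
  have xj: "\<bar>x*t - of_int j\<bar> \<le> \<epsilon>" using x(3) by (simp add: dist_int_def j_def)
  have "real i / K \<le> x" "x \<le> (real i + 1) / K"
    using refined_cell_in_parent_cell[OF assms(2,3) y x(1,2)[unfolded M_def]] by simp_all
  then have "t * (real i / K) \<le> t * x" "t * x \<le> t * ((real i + 1) / K)"
    using t by (simp_all only: mult_left_mono less_imp_le)
  then have "t*i/K \<le> x*t" "x*t \<le> t*(i+1)/K" by (simp_all add: algebra_simps)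
  then have "j \<in> {j::int. t*i/K - \<epsilon> \<le> of_int j \<and> of_int j \<le> t*(i+1)/K + \<epsilon>}" using xj by auto
  moreover have "y \<in> {y::nat. M*(j-\<epsilon>)/t - 1 \<le> real y \<and> real y \<le> M*(j+\<epsilon>)/t}"
    using cell_index_near_integer[OF t M x(1,2) xj] by simp
  ultimately show "y \<in> (\<Union>j\<in>{j::int. t*i/K - \<epsilon> \<le> of_int j \<and> of_int j \<le> t*(i+1)/K + \<epsilon>}.
          {y::nat. M*(j-\<epsilon>)/t - 1 \<le> real y \<and> real y \<le> M*(j+\<epsilon>)/t})"
    by blast
qed

text \<open>Counting lemma: if \<open>K \<le> t \<le> \<epsilon>KR\<close>, at most \<open>12\<epsilon>R\<close> of the refined cells of \<open>[i/K, (i+1)/K)\<close>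
  contain a point \<open>x\<close> with \<open>\<parallel>xt\<parallel> \<le> \<epsilon>\<close>: at most \<open>3t/K\<close> integers are in range, and each of them
  captures at most \<open>4\<epsilon>KR/t\<close> cells.\<close>
lemma card_cells_near_integers:
  fixes t \<epsilon> :: real and K R i :: nat
  assumes t: "t > 0" and \<epsilon>: "0 < \<epsilon>" "\<epsilon> \<le> 1/2" and "K \<ge> 1" "R \<ge> 1"
    and lower: "K \<le> t" and upper: "t \<le> \<epsilon> * (K * R)"
  shows "real (card {y \<in> {i*R..<(i+1)*R}. \<exists>x. real y / (K*R) \<le> x \<and> x < (real y + 1) / (K*R) \<and>
                       dist_int (x * t) \<le> \<epsilon>}) \<le> 12 * \<epsilon> * R"
proof -
  define M where "M = real K * real R"
  have M: "M > 0" using assms by (simp add: M_def)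
  define J where "J = {j::int. t*i/K - \<epsilon> \<le> of_int j \<and> of_int j \<le> t*(i+1)/K + \<epsilon>}"
  define Y where "Y j = {y::nat. M*(j-\<epsilon>)/t - 1 \<le> real y \<and> real y \<le> M*(j+\<epsilon>)/t}" for j :: int
  have fin_J: "finite J" unfolding J_def by (rule card_integers_in_interval(1))
  have fin_Y: "finite (Y j)" for j unfolding Y_def by (rule card_naturals_in_interval(1))
  have card_Y: "real (card (Y j)) \<le> 4*\<epsilon>*M/t" for j
  proof -
    have "real (card (Y j)) \<le> max 0 (M*(j+\<epsilon>)/t - (M*(j-\<epsilon>)/t - 1) + 1)"
      unfolding Y_def by (rule card_naturals_in_interval(2))
    also have "M*(j+\<epsilon>)/t - (M*(j-\<epsilon>)/t - 1) + 1 = 2*\<epsilon>*M/t + 2" using t by (simp add: field_simps)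
    also have "max 0 (2*\<epsilon>*M/t + 2) \<le> 4*\<epsilon>*M/t" using upper t \<epsilon> M by (simp add: M_def field_simps)
    finally show ?thesis .
  qed
  have card_J: "real (card J) \<le> 3*t/K"
  proof -
    have "real (card J) \<le> max 0 (t*(i+1)/K + \<epsilon> - (t*i/K - \<epsilon>) + 1)"
      unfolding J_def by (rule card_integers_in_interval(2))
    also have "t*(i+1)/K + \<epsilon> - (t*i/K - \<epsilon>) + 1 = t/K + 2*\<epsilon> + 1" using assms(4) by (simp add: field_simps)
    also have "max 0 (t/K + 2*\<epsilon> + 1) \<le> 3*t/K"
    proof -
      have "t/K \<ge> 1" using lower assms(4) by (simp add: field_simps)
      then show ?thesis using \<epsilon> by simp
    qed
    finally show ?thesis .
  qed
  have "real (card {y \<in> {i*R..<(i+1)*R}. \<exists>x. real y / (K*R) \<le> x \<and> x < (real y + 1) / (K*R) \<and>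
                       dist_int (x * t) \<le> \<epsilon>}) \<le> real (card (\<Union>j\<in>J. Y j))"
    using card_mono[OF _ cells_near_integers_subset[OF t assms(4,5)]] fin_J fin_Y
    by (simp add: J_def Y_def M_def)
  also have "\<dots> \<le> (\<Sum>j\<in>J. real (card (Y j)))" using card_UN_le[OF fin_J, of Y] by (simp flip: of_nat_sum)
  also have "\<dots> \<le> real (card J) * (4*\<epsilon>*M/t)" using sum_mono[of J _ "\<lambda>_. 4*\<epsilon>*M/t"] card_Y by simp
  also have "\<dots> \<le> (3*t/K) * (4*\<epsilon>*M/t)" by (rule mult_right_mono[OF card_J]) (use \<epsilon> M t in simp)
  also have "\<dots> = 12*\<epsilon>*R" using t assms(4) by (simp add: M_def field_simps)
  finally show ?thesis .
qed

lemma interval_by_digits: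
  fixes R R' i :: nat and P :: "nat \<Rightarrow> bool"
  assumes "R' > 0"
  shows "{y \<in> {i*(R*R')..<(i+1)*(R*R')}. P y} =
           (\<Union>r<R. (\<lambda>u. (i*R + r)*R' + u) ` {u. u < R' \<and> P ((i*R + r)*R' + u)})"
proof (intro equalityI subsetI)
  fix y assume y: "y \<in> {y \<in> {i*(R*R')..<(i+1)*(R*R')}. P y}"
  define r where "r = y div R' - i*R"
  have "i*R = (i*R*R') div R'" using assms by simp
  also have "\<dots> \<le> y div R'" by (rule div_le_mono) (use y in \<open>simp add: mult.assoc\<close>)
  finally have "i*R \<le> y div R'" .
  moreover have "y div R' < (i+1)*R" by (rule less_mult_imp_div_less) (use y in \<open>simp add: algebra_simps\<close>)
  ultimately have "r < R" and y_div: "y div R' = i*R + r" by (auto simp: r_def)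
  moreover have "y = (i*R + r)*R' + y mod R'" unfolding y_div[symmetric] by simp
  moreover have "y mod R' < R'" using assms by simp
  ultimately show "y \<in> (\<Union>r<R. (\<lambda>u. (i*R + r)*R' + u) ` {u. u < R' \<and> P ((i*R + r)*R' + u)})"
    using y by (metis (mono_tags, lifting) UN_I image_eqI lessThan_iff mem_Collect_eq)
next
  fix y assume "y \<in> (\<Union>r<R. (\<lambda>u. (i*R + r)*R' + u) ` {u. u < R' \<and> P ((i*R + r)*R' + u)})"
  then obtain r u where "r < R" "u < R'" "P y" "y = (i*R + r)*R' + u" by auto
  moreover have "(r + 1) * R' \<le> R * R'" using \<open>r < R\<close> by (intro mult_le_mono1) simp
  ultimately show "y \<in> {y \<in> {i*(R*R')..<(i+1)*(R*R')}. P y}" by (auto simp: algebra_simps)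
qed

lemma card_interval_by_digits:
  fixes R R' i :: nat and P :: "nat \<Rightarrow> bool"
  assumes "R' > 0"
  shows "card {y \<in> {i*(R*R')..<(i+1)*(R*R')}. P y} = (\<Sum>r<R. card {u. u < R' \<and> P ((i*R + r)*R' + u)})"
proof -
  define f where "f r u = (i*R + r)*R' + u" for r u
  define G where "G r = f r ` {u. u < R' \<and> P (f r u)}" for r
  have "disjoint_family_on G {..<R}"
  proof (unfold disjoint_family_on_def, intro ballI impI)
    fix m n :: nat assume "m \<noteq> n"
    show "G m \<inter> G n = {}"
    proof (rule ccontr)
      assume "G m \<inter> G n \<noteq> {}"
      then obtain u v where "u < R'" "v < R'" "f m u = f n v" by (auto simp: G_def)
      then have "f m u div R' = f n v div R'" by simp
      then show False using \<open>u < R'\<close> \<open>v < R'\<close> \<open>m \<noteq> n\<close> by (simp add: f_def)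
    qed
  qed
  moreover have "finite (G r)" for r by (simp add: G_def)
  ultimately have "card (\<Union>r<R. G r) = (\<Sum>r<R. card (G r))"
    using card_UN_disjoint'[of G "{..<R}"] by simp
  also have "\<dots> = (\<Sum>r<R. card {u. u < R' \<and> P (f r u)})"
    unfolding G_def by (intro sum.cong refl card_image) (auto simp: inj_on_def f_def)
  finally show ?thesis using interval_by_digits[OF assms, of i R P] by (simp add: G_def f_def)
qed

lemma card_even_below:
  assumes "even R" shows "card {r::nat. r < R \<and> even r} = R div 2"
proof -
  have "{r::nat. r < R \<and> even r} = (\<lambda>j. 2*j) ` {..<R div 2}" using assms by fastforce
  moreover have "inj_on (\<lambda>j::nat. 2*j) {..<R div 2}" by (simp add: inj_on_def)
  ultimately show ?thesis by (simp add: card_image)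
qed

lemma nat_floor_eqI:
  fixes z :: real and y :: nat
  assumes "real y \<le> z" "z < real y + 1"
  shows "nat \<lfloor>z\<rfloor> = y"
proof -
  have "\<lfloor>z\<rfloor> = int y" using assms by (simp add: floor_eq_iff)
  then show ?thesis by simp
qed

lemma nat_floor_bounds:
  fixes z :: real assumes "z \<ge> 0"
  shows "real (nat \<lfloor>z\<rfloor>) \<le> z" "z < real (nat \<lfloor>z\<rfloor>) + 1"
  using assms by (simp_all add: of_nat_floor)

lemma nat_floor_diff_lt:
  fixes z w :: real assumes "z \<ge> 0" "w \<ge> 0"
  shows "\<bar>real (nat \<lfloor>z\<rfloor>) - real (nat \<lfloor>w\<rfloor>)\<bar> < \<bar>z - w\<bar> + 1"
  using nat_floor_bounds[OF assms(1)] nat_floor_bounds[OF assms(2)] by linarith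

lemma nat_floor_mult_div:
  fixes z :: real and R :: nat assumes "z \<ge> 0" and "R > 0"
  shows "nat \<lfloor>z * real R\<rfloor> div R = nat \<lfloor>z\<rfloor>"
proof -
  define q where "q = nat \<lfloor>z\<rfloor>"
  have q: "real q \<le> z" "z < real q + 1" unfolding q_def using nat_floor_bounds[OF assms(1)] by auto
  have "real (R*q) \<le> z * real R" using q(1) assms(2) by (simp add: mult.commute mult_right_mono)
  then have lower: "R*q \<le> nat \<lfloor>z * real R\<rfloor>" by (metis le_nat_floor)
  have "z * real R < (real q + 1) * real R" using q(2) assms(2) by (simp add: mult_strict_right_mono)
  then have "z * real R < real (R * Suc q)" by (simp add: algebra_simps)
  moreover have "real (nat \<lfloor>z * real R\<rfloor>) \<le> z * real R" by (rule nat_floor_bounds(1)) (use assms in simp)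
  ultimately have upper: "nat \<lfloor>z * real R\<rfloor> < R * Suc q" by linarith
  show ?thesis unfolding q_def[symmetric] by (rule div_nat_eqI[OF lower upper])
qed

lemma card_below_diff:
  fixes S :: "nat set" assumes "finite S"
  shows "\<bar>real (card {r\<in>S. r < a}) - real (card {r\<in>S. r < b})\<bar> \<le> \<bar>real a - real b\<bar>"
proof -
  have mono: "card {r\<in>S. r < a} \<le> card {r\<in>S. r < b} \<and> card {r\<in>S. r < b} \<le> card {r\<in>S. r < a} + (b - a)"
    if "a \<le> b" for a b
  proof
    show "card {r\<in>S. r < a} \<le> card {r\<in>S. r < b}" using assms that by (intro card_mono) auto
    have "card {r\<in>S. r < b} \<le> card ({r\<in>S. r < a} \<union> {a..<b})" using assms by (intro card_mono) auto
    also have "\<dots> \<le> card {r\<in>S. r < a} + (b - a)" using card_Un_le[of _ "{a..<b}"] by simp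
    finally show "card {r\<in>S. r < b} \<le> card {r\<in>S. r < a} + (b - a)" .
  qed
  show ?thesis
    using mono[of a b] mono[of b a] by (cases "a \<le> b") (auto simp: of_nat_diff)
qed

lemma even_close_eq:
  fixes m n :: nat
  assumes "\<bar>real m - real n\<bar> < 2" "even m" "even n"
  shows "m = n"
proof (rule ccontr)
  assume "m \<noteq> n"
  then have "m + 2 \<le> n \<or> n + 2 \<le> m" using assms(2,3) by presburger
  then have "real m + 2 \<le> real n \<or> real n + 2 \<le> real m"
    by (metis of_nat_add of_nat_le_iff of_nat_numeral)
  then show False using assms(1) by linarith
qed

lemma card_below_nth_sorted:
  fixes S :: "nat set" assumes "finite S" and "d < card S"
  shows "card {r\<in>S. r < sorted_list_of_set S ! d} = d"
proof -
  define xs where "xs = sorted_list_of_set S"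
  have set_xs: "set xs = S" and len: "length xs = card S" and "distinct xs"
    using assms(1) by (simp_all add: xs_def)
  have sorted: "sorted_wrt (<) xs" unfolding xs_def by (rule strict_sorted_list_of_set)
  have "{r\<in>S. r < xs ! d} = (\<lambda>i. xs ! i) ` {..<d}"
  proof (intro equalityI subsetI)
    fix r assume r: "r \<in> {r\<in>S. r < xs ! d}"
    then obtain i where i: "i < length xs" "r = xs ! i" using set_xs by (auto simp: in_set_conv_nth)
    have "i < d"
    proof (rule ccontr)
      assume "\<not> i < d"
      then have "xs ! d \<le> xs ! i"
        using sorted_wrt_nth_less[OF sorted, of d i] i(1) by (cases "d = i") auto
      then show False using r i by simp
    qed
    then show "r \<in> (\<lambda>i. xs ! i) ` {..<d}" using i by auto
  next
    fix r assume "r \<in> (\<lambda>i. xs ! i) ` {..<d}"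
    then obtain i where "i < d" "r = xs ! i" by auto
    then show "r \<in> {r\<in>S. r < xs ! d}"
      using sorted_wrt_nth_less[OF sorted \<open>i < d\<close>] assms(2) len set_xs by auto
  qed
  moreover have "inj_on (\<lambda>i. xs ! i) {..<d}"
    using \<open>distinct xs\<close> assms(2) len by (auto simp: inj_on_def nth_eq_iff_index_eq)
  ultimately show ?thesis by (simp add: card_image xs_def)
qed

section \<open>Partial sums of \<open>1/(n ln n)\<close>\<close>

text \<open>The series \<open>\<Sum> 1/(n ln n)\<close> diverges like \<open>ln ln n\<close>; over a range \<open>[2^Y, 2^{DY})\<close> it is at
  most \<open>ln (2D)\<close>, uniformly in \<open>Y\<close>.\<close>
lemma inverse_n_ln_le_ln_ln_diff:
  fixes n :: real assumes "n \<ge> 3"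
  shows "1 / (n * ln n) \<le> ln (ln n) - ln (ln (n - 1))"
proof -
  have pos: "ln (n - 1) > 0" "ln n > 0" using assms by simp_all
  have "ln ((n - 1) / n) \<le> (n - 1) / n - 1" by (rule ln_le_minus_one) (use assms in simp)
  then have d: "1/n \<le> ln n - ln (n - 1)" using assms by (simp add: ln_div field_simps)
  have "ln (ln n / ln (n - 1)) \<ge> 1 - ln (n - 1) / ln n"
    using ln_le_minus_one[of "ln (n - 1) / ln n"] pos by (simp add: ln_div)
  then have "ln (ln n) - ln (ln (n - 1)) \<ge> (ln n - ln (n - 1)) / ln n"
    using pos by (simp add: ln_div diff_divide_distrib)
  moreover have "1 / (n * ln n) \<le> (ln n - ln (n - 1)) / ln n"
    using divide_right_mono[OF d, of "ln n"] pos by simp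
  ultimately show ?thesis by linarith
qed

lemma sum_inverse_n_ln_le:
  fixes A B :: nat assumes "A \<ge> 3" and "A \<le> B"
  shows "(\<Sum>n\<in>{A..<B}. 1 / (real n * ln (real n))) \<le> ln (ln (real B - 1)) - ln (ln (real A - 1))"
  using \<open>A \<le> B\<close>
proof (induction B rule: dec_induct)
  case (step B)
  then show ?case using inverse_n_ln_le_ln_ln_diff[of "real B"] \<open>A \<ge> 3\<close> by simp
qed simp

text \<open>On a range \<open>[2^Y, 2^(DY))\<close> the bound becomes \<open>ln (DY/(Y-1)) \<le> ln (2D)\<close>.\<close>
lemma sum_inverse_n_ln_dyadic_range:
  fixes Y D :: nat assumes Y: "Y \<ge> 2" and D: "D \<ge> 2"
  shows "(\<Sum>n\<in>{2^Y..<2^(D*Y)}. 1 / (real n * ln (real n))) \<le> ln (2*D)"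
proof -
  have "(2::nat)^2 \<le> 2^Y" using Y by (intro power_increasing) auto
  then have A3: "(2::nat)^Y \<ge> 3" by simp
  have AB: "(2::nat)^Y \<le> 2^(D*Y)" using D by (intro power_increasing) auto
  have two_le: "(2::real) \<le> 2^(Y-1)" using power_increasing[of 1 "Y-1" "2::real"] Y by simp
  have pow_Y: "(2::real)^Y = 2 * 2^(Y-1)" using Y by (cases Y) auto
  have "real (2^(D*Y)) \<ge> 3" using A3 AB by linarith
  then have "ln (ln (real (2^(D*Y)) - 1)) \<le> ln (ln (2 ^ (D*Y)))" by (subst ln_le_cancel_iff) auto
  moreover have "ln (ln (2^(Y-1))) \<le> ln (ln (real (2^Y) - 1))"
    using two_le pow_Y by (subst ln_le_cancel_iff) auto
  ultimately have "(\<Sum>n\<in>{2^Y..<2^(D*Y)}. 1 / (real n * ln (real n))) \<le> ln (ln (2 ^ (D*Y))) - ln (ln (2^(Y-1)))"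
    using sum_inverse_n_ln_le[OF A3 AB] by linarith
  also have "\<dots> = ln (real (D*Y) / real (Y-1))"
    using Y D by (simp add: ln_realpow ln_div ln_mult)
  also have "\<dots> \<le> ln (2*D)"
  proof -
    have "real Y \<le> 2 * real (Y-1)" using Y by linarith
    then have "real D * real Y \<le> 2 * real D * real (Y-1)" using mult_left_mono[of "real Y" "2 * real (Y-1)" "real D"] by (simp add: mult.assoc mult.left_commute)
    then have "real (D*Y) / real (Y-1) \<le> 2*D" using Y by (simp add: field_simps)
    then show ?thesis using Y D by simp
  qed
  finally show ?thesis .
qed

section \<open>The construction\<close>

locale construction =
  fixes t :: "nat \<Rightarrow> real" and \<gamma> C1 C2 :: real and E D a :: nat
  assumes C1_pos: "C1 > 0" and C2_pos: "C2 > 0" and \<gamma>_pos: "\<gamma> > 0"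
    and t_bounds: "\<forall>n\<ge>1. C1 * real n powr \<gamma> \<le> t n \<and> t n \<le> C2 * real n powr \<gamma>"
    and E_large: "real E \<ge> 2*\<gamma> + 4" and D_ge_2: "D \<ge> 2" and D_gamma: "real D * \<gamma> \<ge> real E + 1"
    and a_ge_2: "a \<ge> 2" and a_C1: "C1 * 2^a \<ge> 1"
    and a_C2: "\<forall>x\<ge>a. (C2 * 768 * ln (2 * real D)) * real x \<le> 2^x"
begin

subsection \<open>Parameters, grids and blocks\<close>

text \<open>\<open>C\<close> is the constant of the theorem.  At level \<open>k\<close> the unit interval is cut into \<open>grid k\<close>
  cells, each of which has \<open>branch k\<close> children at level \<open>k + 1\<close>.  The indices \<open>n\<close> of block \<open>L\<close>
  are taken care of at level \<open>L\<close>; \<open>eps n\<close> is the radius of the forbidden zone of \<open>t n\<close>.\<close>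
definition C :: real where "C = 1 / (768 * ln (2 * real D))"
definition grid_exp :: "nat \<Rightarrow> nat" where "grid_exp k = E * a * (D^k - 1)"
definition grid :: "nat \<Rightarrow> nat" where "grid k = 2 ^ grid_exp k"
definition branch :: "nat \<Rightarrow> nat" where "branch k = 2 ^ (grid_exp (Suc k) - grid_exp k)"
definition N :: "nat \<Rightarrow> nat" where "N j = 2 ^ (a * D^j)"
definition block :: "nat \<Rightarrow> nat set" where "block L = (if 2 \<le> L then {N (L-1)..<N L} else {})"
definition eps :: "nat \<Rightarrow> real" where "eps n = C / (real n * ln (real n))"

lemma C_pos: "C > 0"
  using D_ge_2 by (simp add: C_def)

lemma C_times_ln: "C * ln (2 * real D) = 1/768"
  using D_ge_2 by (simp add: C_def)

lemma grid_exp_mono: "i \<le> j \<Longrightarrow> grid_exp i \<le> grid_exp j"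
  unfolding grid_exp_def using D_ge_2 by (intro mult_le_mono2 diff_le_mono power_increasing) auto

lemma grid_exp_step: "grid_exp (Suc k) - grid_exp k \<ge> 8"
proof -
  have "grid_exp (Suc k) - grid_exp k = E * a * (D^Suc k - D^k)"
    unfolding grid_exp_def using D_ge_2 by (simp add: diff_mult_distrib2)
  moreover have "D^Suc k - D^k \<ge> 1" using D_ge_2 by (simp add: Suc_le_eq)
  moreover have "E * a \<ge> 4 * 2" using E_large \<gamma>_pos a_ge_2 by (intro mult_le_mono) linarith+
  ultimately show ?thesis using mult_le_mono[of 8 "E * a" 1 "D^Suc k - D^k"] by simp
qed

lemma grid_exp_lower: "real (grid_exp k) \<ge> 8 * (2^k - 1)"
proof -
  have "(2::nat)^k \<le> D^k" using D_ge_2 by (intro power_mono) auto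
  moreover have "E * a \<ge> 4 * 2" using E_large \<gamma>_pos a_ge_2 by (intro mult_le_mono) linarith+
  ultimately have "8 * (2^k - 1) \<le> grid_exp k" unfolding grid_exp_def by (intro mult_le_mono) auto
  then have "real (8 * (2^k - 1)) \<le> real (grid_exp k)" by (rule of_nat_mono)
  then show ?thesis by (simp add: of_nat_diff)
qed

lemma grid_Suc: "grid (Suc k) = grid k * branch k"
  unfolding grid_def branch_def using grid_exp_mono[of k "Suc k"] by (simp flip: power_add)

lemma grid_pos: "grid k \<ge> 1"
  by (simp add: grid_def)

lemma grid_mono: "i \<le> j \<Longrightarrow> grid i \<le> grid j"
  unfolding grid_def by (intro power_increasing grid_exp_mono) auto

lemma grid_gt: "real (grid k) > real k"
proof -
  have "real (Suc k) \<le> real ((2::nat)^k)" by (rule of_nat_mono) (rule Suc_leI[OF less_exp])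
  then have "real k + 1 \<le> 2^k" by simp
  then have "real k \<le> real (grid_exp k)" using grid_exp_lower[of k] by (smt (verit) of_nat_0_le_iff)
  then have "k \<le> grid_exp k" by simp
  then have "(2::nat)^k \<le> grid k" unfolding grid_def by (intro power_increasing) auto
  then show ?thesis using less_exp[of k] by linarith
qed

lemma branch_ge_256: "branch k \<ge> 256"
  using power_increasing[OF grid_exp_step[of k], of "2::nat"] by (simp add: branch_def)

lemma branch_eq_8_times: "branch k = 8 * (branch k div 8)"
proof -
  have "grid_exp (Suc k) - grid_exp k = 3 + (grid_exp (Suc k) - grid_exp k - 3)"
    using grid_exp_step[of k] by simp
  then have "branch k = 2^3 * 2^(grid_exp (Suc k) - grid_exp k - 3)"
    unfolding branch_def by (metis power_add)
  then show ?thesis by simp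
qed

lemma N_ge_4: "N j \<ge> 4"
proof -
  have "a * D^j \<ge> 2" using a_ge_2 D_ge_2 by (metis le_trans mult_le_mono one_le_power mult_1_right one_le_numeral)
  then have "(2::nat)^2 \<le> 2^(a*D^j)" by (intro power_increasing) auto
  then show ?thesis by (simp add: N_def)
qed

lemma N_mono: "i \<le> j \<Longrightarrow> N i \<le> N j"
  unfolding N_def using D_ge_2 a_ge_2 by (intro power_increasing mult_le_mono2 power_increasing) auto

lemma N_gt: "n < N n"
proof -
  have "n < 2^n" by (rule less_exp)
  also have "(2::nat)^n \<le> D^n" using D_ge_2 by (intro power_mono) auto
  also have "D^n \<le> a * D^n" using a_ge_2 by simp
  finally have "n < a * D^n" .
  then have "n < 2^(a * D^n)" using less_exp[of "a * D^n"] by linarith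
  then show ?thesis by (simp add: N_def)
qed

lemma block_mem: "n \<in> block L \<Longrightarrow> 2 \<le> L \<and> N (L-1) \<le> n \<and> n < N L"
  by (auto simp: block_def split: if_splits)

lemma block_ge_4: "n \<in> block L \<Longrightarrow> n \<ge> 4"
  using block_mem N_ge_4 le_trans by blast

lemma in_some_block:
  assumes "n \<ge> N 1" shows "\<exists>L. n \<in> block L"
proof -
  define L where "L = (LEAST j. n < N j)"
  have "n < N L" unfolding L_def by (rule LeastI[of _ n]) (rule N_gt)
  moreover have "L \<ge> 2"
    using N_mono[of L 1] \<open>n < N L\<close> assms by (cases "L \<le> 1") auto
  moreover have "\<not> n < N (L-1)"
    using Least_le[of "\<lambda>j. n < N j" "L-1"] \<open>L \<ge> 2\<close> by (auto simp: L_def[symmetric])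
  ultimately have "n \<in> block L" unfolding block_def by auto
  then show ?thesis by blast
qed

lemma t_lower: "n \<ge> 1 \<Longrightarrow> C1 * real n powr \<gamma> \<le> t n"
  using t_bounds by blast

lemma t_upper: "n \<ge> 1 \<Longrightarrow> t n \<le> C2 * real n powr \<gamma>"
  using t_bounds by blast

lemma t_pos: "n \<ge> 1 \<Longrightarrow> t n > 0"
  using t_lower[of n] C1_pos by (smt (verit) powr_gt_zero of_nat_le_0_iff mult_pos_pos not_one_le_zero)

lemma real_two_pow_powr: "real ((2::nat)^k) powr x = 2 powr (real k * x)"
  by (simp add: powr_powr[symmetric] powr_realpow)

lemma grid_le_t:
  assumes n: "n \<in> block L" shows "real (grid (L-2)) \<le> t n"
proof -
  from block_mem[OF n] have L: "2 \<le> L" and n_lower: "N (L-1) \<le> n" by auto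
  define Z where "Z = a * D^(L-2)"
  have "L - 1 = Suc (L - 2)" using L by simp
  then have N_eq: "N (L-1) = 2^(D*Z)" unfolding N_def Z_def by simp
  have C1_Z: "C1 * 2^Z \<ge> 1"
  proof -
    have "(2::real)^a \<le> 2^Z" using D_ge_2 by (intro power_increasing) (auto simp: Z_def)
    then show ?thesis using a_C1 C1_pos by (smt (verit) mult_left_mono)
  qed
  have "real (grid (L-2)) \<le> 2^(E*Z)"
    unfolding grid_def grid_exp_def Z_def by (simp add: power_increasing diff_mult_distrib2)
  also have "\<dots> \<le> 2^(E*Z) * (C1 * 2^Z)" using C1_Z by simp
  also have "\<dots> = C1 * 2 powr ((real E + 1) * real Z)"
    by (simp add: powr_realpow[symmetric] powr_add[symmetric] algebra_simps)
  also have "\<dots> \<le> C1 * 2 powr (real (D*Z) * \<gamma>)"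
  proof -
    have "(real E + 1) * real Z \<le> (real D * \<gamma>) * real Z" using D_gamma by (intro mult_right_mono) auto
    then show ?thesis using C1_pos by (intro mult_left_mono powr_mono) (auto simp: algebra_simps)
  qed
  also have "\<dots> = C1 * real (N (L-1)) powr \<gamma>" unfolding N_eq real_two_pow_powr ..
  also have "\<dots> \<le> C1 * real n powr \<gamma>"
    using n_lower C1_pos \<gamma>_pos by (intro mult_left_mono powr_mono2) auto
  also have "\<dots> \<le> t n" using t_lower block_ge_4[OF n] by simp
  finally show ?thesis .
qed

lemma grid_lower:
  assumes "L \<ge> 2"
  shows "real (grid L) \<ge> 2 powr (real (a*D^L) * \<gamma>) * 2^(a*D^L) * 2^(a*D^L)"
proof -
  define X where "X = a * D^L"
  have "D^L \<ge> 2" using D_ge_2 assms power_increasing[of 1 L D] by simp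
  then have "real (grid_exp L) = real E * real a * (real (D^L) - 1)"
    unfolding grid_exp_def by (simp add: of_nat_diff)
  also have "\<dots> \<ge> real E * real a * (real (D^L) / 2)"
  proof -
    have "real (D^L) \<ge> 2" using \<open>D^L \<ge> 2\<close> by (metis of_nat_le_iff of_nat_numeral)
    then show ?thesis by (intro mult_left_mono) auto
  qed
  also have "real E * real a * (real (D^L) / 2) = (real E / 2) * real X" by (simp add: X_def)
  also have "(real E / 2) * real X \<ge> (\<gamma> + 2) * real X" using E_large by (intro mult_right_mono) auto
  finally have "real (grid L) \<ge> 2 powr ((\<gamma> + 2) * real X)"
    by (simp add: grid_def powr_realpow[symmetric])
  then show ?thesis
    by (simp add: X_def powr_realpow[symmetric] powr_add[symmetric] algebra_simps)
qed

text \<open>For \<open>n\<close> in the \<open>L\<close>-th block, the cells of level \<open>L\<close> are short compared with the width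
  \<open>eps n / t n\<close> of the forbidden zones around the points \<open>j / t n\<close>.\<close>
lemma t_le_eps_grid:
  assumes n: "n \<in> block L" shows "t n \<le> eps n * grid L"
proof -
  from block_mem[OF n] have L: "2 \<le> L" and "n < N L" by auto
  define X where "X = a * D^L"
  have n4: "real n \<ge> 4" using block_ge_4[OF n] by simp
  have nX: "real n \<le> 2^X" using \<open>n < N L\<close> by (simp add: N_def X_def flip: of_nat_less_iff)
  have ln_n: "0 < ln (real n)" "ln (real n) \<le> real X"
  proof -
    show "0 < ln (real n)" using n4 by simp
    have "ln (real n) \<le> ln (2^X)" using nX n4 by simp
    also have "\<dots> = real X * ln 2" by (simp add: ln_realpow)
    also have "\<dots> \<le> real X" using ln_2_less_1 by (simp add: mult_left_le)
    finally show "ln (real n) \<le> real X" .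
  qed
  have n_powr: "real n powr \<gamma> \<le> 2 powr (real X * \<gamma>)"
    using powr_mono2[of \<gamma> "real n" "real ((2::nat)^X)"] nX \<gamma>_pos n4 real_two_pow_powr[of X \<gamma>] by simp
  have "X \<ge> a" unfolding X_def using D_ge_2 by simp
  moreover have "C2 / C = C2 * 768 * ln (2 * real D)" by (simp add: C_def)
  ultimately have X_bound: "(C2/C) * real X \<le> 2^X" using a_C2 by simp
  have "C2 * real n powr \<gamma> * (real n * ln (real n)) \<le> C2 * 2 powr (real X * \<gamma>) * (2^X * real X)"
    using n_powr nX ln_n n4 C2_pos by (intro mult_mono) auto
  also have "\<dots> = C * (2 powr (real X * \<gamma>) * 2^X * ((C2/C) * real X))"
    using C_pos by (simp add: field_simps)
  also have "\<dots> \<le> C * (2 powr (real X * \<gamma>) * 2^X * 2^X)"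
    using X_bound C_pos by (intro mult_left_mono) auto
  also have "\<dots> \<le> C * real (grid L)" using grid_lower[OF L] C_pos by (simp add: X_def)
  finally have "C2 * real n powr \<gamma> \<le> C * real (grid L) / (real n * ln (real n))"
    using n4 ln_n by (simp add: pos_le_divide_eq)
  then show ?thesis using t_upper[of n] block_ge_4[OF n] by (simp add: eps_def)
qed

lemma block_eps_sum:
  assumes "L \<ge> 2" shows "(\<Sum>n\<in>block L. eps n) \<le> 1/768"
proof -
  obtain L' where L': "L = Suc L'" using assms by (cases L) auto
  define Y where "Y = a * D^L'"
  have "Y \<ge> 2" using a_ge_2 D_ge_2 by (simp add: Y_def) (metis le_trans mult_le_mono one_le_power mult_1_right one_le_numeral)
  have "block L = {2^Y..<2^(D*Y)}"
    using assms by (simp add: block_def N_def Y_def L' mult.left_commute)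
  then have "(\<Sum>n\<in>block L. eps n) = C * (\<Sum>n\<in>{2^Y..<2^(D*Y)}. 1 / (real n * ln (real n)))"
    by (simp add: eps_def sum_distrib_left)
  also have "\<dots> \<le> C * ln (2 * real D)"
    using sum_inverse_n_ln_dyadic_range[OF \<open>Y \<ge> 2\<close> D_ge_2] C_pos by (intro mult_left_mono) auto
  finally show ?thesis using C_times_ln by simp
qed

lemma eps_bounds:
  assumes "n \<in> block L" shows "0 < eps n" "eps n \<le> 1/2"
proof -
  have "ln (4::real) > 1"
    using exp_le ln_less_cancel_iff[of "exp 1" 4] by simp
  moreover have "ln (real n) \<ge> ln 4" "ln (2 * real D) \<ge> ln 4" using block_ge_4[OF assms] D_ge_2 by simp_all
  ultimately have ln_ge: "ln (real n) \<ge> 1" "ln (2 * real D) \<ge> 1" by linarith+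
  then have "real n * ln (real n) \<ge> 1 * 1" using block_ge_4[OF assms] by (intro mult_mono) auto
  moreover have "C \<le> 1/2" using ln_ge by (simp add: C_def field_simps)
  ultimately show "0 < eps n" "eps n \<le> 1/2"
    using C_pos by (auto simp: eps_def field_simps intro: order_trans)
qed

subsection \<open>The tree of selected cells\<close>

text \<open>A cell \<open>y\<close> of level \<open>L\<close>, the interval \<open>[y / grid L, (y+1) / grid L)\<close>, is good if it avoids
  the forbidden zones of block \<open>L\<close>.  The children of the cell \<open>i\<close> of level \<open>k\<close> are the cells
  \<open>i * branch k + r\<close> with \<open>r < branch k\<close>; the cell is nice if at most \<open>1/8\<close> of them are bad.  Each
  cell chooses \<open>quota k = branch k / 8\<close> eligible children (even index, good and nice), and the
  selected cells are those reached from the cell \<open>0\<close> of level \<open>0\<close> through chosen children.\<close>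
definition good :: "nat \<Rightarrow> nat \<Rightarrow> bool" where
  "good L y \<longleftrightarrow> (\<forall>n\<in>block L. \<forall>x. real y / grid L \<le> x \<and> x < (real y + 1) / grid L \<longrightarrow>
                   eps n < dist_int (x * t n))"

definition bad_children :: "nat \<Rightarrow> nat \<Rightarrow> nat set" where
  "bad_children k i = {r. r < branch k \<and> \<not> good (Suc k) (i * branch k + r)}"

definition nice :: "nat \<Rightarrow> nat \<Rightarrow> bool" where
  "nice k i \<longleftrightarrow> card (bad_children k i) \<le> branch k div 8"

definition quota :: "nat \<Rightarrow> nat" where
  "quota k = branch k div 8"

definition eligible :: "nat \<Rightarrow> nat \<Rightarrow> nat set" where
  "eligible k i = {r. r < branch k \<and> even r \<and> good (Suc k) (i * branch k + r) \<and> nice (Suc k) (i * branch k + r)}"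

definition chosen :: "nat \<Rightarrow> nat \<Rightarrow> nat set" where
  "chosen k i = (SOME T. T \<subseteq> eligible k i \<and> card T = quota k)"

primrec selected :: "nat \<Rightarrow> nat \<Rightarrow> bool" where
  "selected 0 y \<longleftrightarrow> y = 0"
| "selected (Suc k) y \<longleftrightarrow> selected k (y div branch k) \<and> y mod branch k \<in> chosen k (y div branch k)"

lemma quota_ge_32: "quota k \<ge> 32"
  using branch_ge_256[of k] unfolding quota_def by linarith

lemma branch_eq_8_quota: "branch k = 8 * quota k"
  using branch_eq_8_times[of k] by (simp add: quota_def)

text \<open>Inside a cell of level \<open>k\<close>, at most a fraction \<open>1/64\<close> of the cells of level \<open>k + 2\<close> are bad:
  by the counting lemma each \<open>n\<close> of block \<open>k + 2\<close> spoils a fraction \<open>12 eps n\<close>, and these add up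
  to at most \<open>12/768\<close>.\<close>
lemma card_bad_grandchildren:
  fixes k i :: nat
  defines "R2 \<equiv> branch k * branch (Suc k)"
  shows "real (card {y \<in> {i*R2..<(i+1)*R2}. \<not> good (Suc (Suc k)) y}) \<le> real R2 / 64"
proof -
  define L where "L = Suc (Suc k)"
  have grid_L: "real (grid L) = real (grid k) * real R2" by (simp add: L_def R2_def grid_Suc)
  have "R2 \<ge> 1" using branch_ge_256[of k] branch_ge_256[of "Suc k"] by (simp add: R2_def Suc_le_eq)
  define B where "B n = {y \<in> {i*R2..<(i+1)*R2}. \<exists>x. real y / (grid k * R2) \<le> x \<and>
                           x < (real y + 1) / (grid k * R2) \<and> dist_int (x * t n) \<le> eps n}" for n
  have "{y \<in> {i*R2..<(i+1)*R2}. \<not> good L y} \<subseteq> (\<Union>n\<in>block L. B n)"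
  proof
    fix y assume y: "y \<in> {y \<in> {i*R2..<(i+1)*R2}. \<not> good L y}"
    then obtain n x where "n \<in> block L" "real y / grid L \<le> x" "x < (real y + 1) / grid L"
        "\<not> eps n < dist_int (x * t n)"
      unfolding good_def by blast
    then have "y \<in> B n" using y grid_L by (auto simp: B_def)
    then show "y \<in> (\<Union>n\<in>block L. B n)" using \<open>n \<in> block L\<close> by blast
  qed
  then have "card {y \<in> {i*R2..<(i+1)*R2}. \<not> good L y} \<le> card (\<Union>n\<in>block L. B n)"
    by (intro card_mono finite_UN_I) (auto simp: B_def block_def)
  also have "\<dots> \<le> (\<Sum>n\<in>block L. card (B n))" by (rule card_UN_le) (simp add: block_def)
  finally have "real (card {y \<in> {i*R2..<(i+1)*R2}. \<not> good L y}) \<le> (\<Sum>n\<in>block L. real (card (B n)))"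
    by (simp flip: of_nat_sum)
  also have "\<dots> \<le> (\<Sum>n\<in>block L. 12 * eps n * R2)"
  proof (intro sum_mono)
    fix n assume n: "n \<in> block L"
    have "L - 2 = k" by (simp add: L_def)
    then show "real (card (B n)) \<le> 12 * eps n * R2" unfolding B_def
      using card_cells_near_integers[of "t n" "eps n" "grid k" R2 i] t_pos[of n] block_ge_4[OF n]
        eps_bounds[OF n] grid_pos[of k] \<open>R2 \<ge> 1\<close> grid_le_t[OF n] t_le_eps_grid[OF n] grid_L
      by simp
  qed
  also have "\<dots> = 12 * R2 * (\<Sum>n\<in>block L. eps n)" by (simp add: sum_distrib_left mult_ac)
  also have "\<dots> \<le> 12 * R2 * (1/768)" using block_eps_sum[of L] by (intro mult_left_mono) (auto simp: L_def)
  finally show ?thesis by (simp add: L_def)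
qed

text \<open>Markov's inequality: at most \<open>1/8\<close> of the children of a cell are not nice, since a child that is
  not nice contributes more than \<open>branch (k+1) / 8\<close> bad grandchildren.\<close>
lemma card_not_nice_children:
  "card {r. r < branch k \<and> \<not> nice (Suc k) (i * branch k + r)} \<le> quota k"
proof -
  define R where "R = branch k"
  define q where "q = quota (Suc k)"
  define T where "T = {r. r < R \<and> \<not> nice (Suc k) (i * R + r)}"
  have "branch (Suc k) > 0" using branch_ge_256[of "Suc k"] by simp
  have "q > 0" using quota_ge_32[of "Suc k"] by (simp add: q_def)
  have "q + 1 \<le> card (bad_children (Suc k) (i*R + r))" if "r \<in> T" for r
    using that by (simp add: T_def nice_def q_def quota_def)
  then have "card T * (q + 1) \<le> (\<Sum>r\<in>T. card (bad_children (Suc k) (i*R + r)))"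
    using sum_mono[of T "\<lambda>_. q + 1"] by simp
  also have "\<dots> \<le> (\<Sum>r<R. card (bad_children (Suc k) (i*R + r)))"
    by (intro sum_mono2) (auto simp: T_def)
  also have "\<dots> = card {y \<in> {i*(R * branch (Suc k))..<(i+1)*(R * branch (Suc k))}. \<not> good (Suc (Suc k)) y}"
    using card_interval_by_digits[OF \<open>branch (Suc k) > 0\<close>, of i R "\<lambda>y. \<not> good (Suc (Suc k)) y"]
    by (simp add: bad_children_def)
  finally have "real (card T * (q + 1)) \<le>
      real (card {y \<in> {i*(R * branch (Suc k))..<(i+1)*(R * branch (Suc k))}. \<not> good (Suc (Suc k)) y})"
    by (simp only: of_nat_le_iff)
  also have "\<dots> \<le> real (R * branch (Suc k)) / 64"
    unfolding R_def by (rule card_bad_grandchildren)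
  finally have "real (card T * (q + 1)) \<le> real (R * branch (Suc k)) / 64" .
  moreover have "real (card T * q) \<le> real (card T * (q + 1))" by (intro of_nat_mono) simp
  ultimately have "real (card T) * real q \<le> real R / 8 * real q"
    using branch_eq_8_quota[of "Suc k"] by (simp add: q_def)
  then have "real (card T) \<le> real R / 8" using \<open>q > 0\<close> by simp
  then show ?thesis using branch_eq_8_quota[of k] by (simp add: T_def R_def)
qed

text \<open>A nice cell has at least \<open>quota k\<close> eligible children: half of its children have even index,
  and at most \<open>1/8\<close> of them are bad and at most \<open>1/8\<close> are not nice.\<close>
lemma card_eligible:
  assumes "nice k i" shows "card (eligible k i) \<ge> quota k"
proof -
  define R where "R = branch k"
  define Ev where "Ev = {r::nat. r < R \<and> even r}"
  define T where "T = {r. r < R \<and> \<not> nice (Suc k) (i * R + r)}"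
  have R8: "R = 8 * quota k" unfolding R_def by (rule branch_eq_8_quota)
  have "card Ev = 4 * quota k" using card_even_below[of R] R8 by (simp add: Ev_def)
  moreover have "card (bad_children k i) \<le> quota k" using assms by (simp add: nice_def quota_def)
  moreover have "card T \<le> quota k" using card_not_nice_children[of k i] by (simp add: T_def R_def)
  moreover have "eligible k i = Ev - bad_children k i - T"
    unfolding eligible_def Ev_def bad_children_def T_def R_def by auto
  then have "card Ev - card (bad_children k i) - card T \<le> card (eligible k i)"
    using diff_card_le_card_Diff[of "bad_children k i" Ev] diff_card_le_card_Diff[of T "Ev - bad_children k i"]
    by (auto simp: bad_children_def T_def)
  ultimately show ?thesis by linarith
qed

lemma chosen_props:
  assumes "nice k i"
  shows "chosen k i \<subseteq> eligible k i" "card (chosen k i) = quota k" "finite (chosen k i)"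
proof -
  obtain T where "T \<subseteq> eligible k i" "card T = quota k"
    using obtain_subset_with_card_n[OF card_eligible[OF assms]] by blast
  then have "chosen k i \<subseteq> eligible k i \<and> card (chosen k i) = quota k"
    unfolding chosen_def by (intro someI[of "\<lambda>T. T \<subseteq> eligible k i \<and> card T = quota k"]) blast
  moreover have "finite (eligible k i)" by (simp add: eligible_def)
  ultimately show "chosen k i \<subseteq> eligible k i" "card (chosen k i) = quota k" "finite (chosen k i)"
    using finite_subset by blast+
qed

text \<open>Selected cells are good and nice; the induction works because only nice cells choose
  children, and they choose among good and nice ones.\<close>
lemma selected_good_nice:
  "selected k y \<Longrightarrow> good k y \<and> nice k y"
proof (induction k arbitrary: y)
  case 0
  have "bad_children 0 0 = {}" by (simp add: bad_children_def good_def block_def)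
  then show ?case using 0 by (simp add: nice_def good_def block_def)
next
  case (Suc k)
  define p where "p = y div branch k"
  have "nice k p" using Suc by (simp add: p_def)
  moreover have "y mod branch k \<in> chosen k p" using Suc.prems by (simp add: p_def)
  ultimately have "y mod branch k \<in> eligible k p" using chosen_props(1) by blast
  moreover have "p * branch k + y mod branch k = y" by (simp add: p_def)
  ultimately show ?case unfolding eligible_def by auto
qed

lemma selected_chosen:
  assumes "selected k i"
  shows "chosen k i \<subseteq> {r. r < branch k \<and> even r}" "card (chosen k i) = quota k" "finite (chosen k i)"
  using chosen_props[of k i] selected_good_nice[OF assms] by (auto simp: eligible_def)

subsection \<open>The Cantor set\<close>

definition cell :: "nat \<Rightarrow> real \<Rightarrow> nat" where
  "cell k x = nat \<lfloor>x * real (grid k)\<rfloor>"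

definition cantor :: "real set" where
  "cantor = {x. 0 \<le> x \<and> x < 1 \<and> (\<forall>k. selected k (cell k x))}"

definition target :: "real set" where
  "target = (\<Inter>n\<in>{N 1..}. {\<xi>. dist_int (\<xi> * t n) > C / (real n * ln (real n))})"

lemma cell_bounds:
  assumes "x \<ge> 0"
  shows "real (cell k x) / grid k \<le> x" "x < (real (cell k x) + 1) / grid k"
proof -
  have "real (grid k) > 0" using grid_pos[of k] by simp
  then show "real (cell k x) / grid k \<le> x" "x < (real (cell k x) + 1) / grid k"
    using nat_floor_bounds[of "x * grid k"] assms unfolding cell_def by (simp_all add: field_simps)
qed

lemma cell_Suc_div: "x \<ge> 0 \<Longrightarrow> cell (Suc k) x div branch k = cell k x"
  using nat_floor_mult_div[of "x * real (grid k)" "branch k"] branch_ge_256[of k]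
  by (simp add: cell_def grid_Suc mult.assoc)

lemma cell_Suc: "x \<ge> 0 \<Longrightarrow> cell (Suc k) x = cell k x * branch k + cell (Suc k) x mod branch k"
  using cell_Suc_div[of x k] by (metis div_mult_mod_eq)

lemma cell_0: "0 \<le> x \<Longrightarrow> x < 1 \<Longrightarrow> cell 0 x = 0"
  by (simp add: cell_def grid_def grid_exp_def)

text \<open>Points of the Cantor set avoid every forbidden zone, because their cell of level \<open>L\<close> is good.\<close>
lemma cantor_subset_target: "cantor \<subseteq> target"
proof
  fix x assume "x \<in> cantor"
  then have "x \<ge> 0" and sel: "\<And>k. selected k (cell k x)" by (auto simp: cantor_def)
  have "eps n < dist_int (x * t n)" if n: "n \<ge> N 1" for n
  proof -
    obtain L where "n \<in> block L" using in_some_block[OF n] by blast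
    moreover have "good L (cell L x)" using selected_good_nice[OF sel] by blast
    ultimately show ?thesis using cell_bounds[OF \<open>x \<ge> 0\<close>, of L] unfolding good_def by blast
  qed
  then show "x \<in> target" by (auto simp: target_def eps_def)
qed

subsection \<open>The map \<open>phi\<close> and its Hoelder continuity\<close>

text \<open>The map \<open>phi\<close> reads off, level by level, the rank of the cell of \<open>x\<close> among the chosen
  children of its parent, as a digit in the mixed radix \<open>quota 0, quota 1, ...\<close>.  Every level has
  \<open>quota k = branch k / 8\<close> chosen children, so \<open>phi\<close> expands distances by at most \<open>8^k\<close> at scale
  \<open>1 / grid k\<close>, which is a Hoelder bound of any exponent \<open>s < 1\<close>.\<close>
definition weight :: "nat \<Rightarrow> nat" where
  "weight k = (\<Prod>m<k. quota m)"

definition digit :: "nat \<Rightarrow> real \<Rightarrow> nat" where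
  "digit m x = card {r \<in> chosen m (cell m x). r < cell (Suc m) x mod branch m}"

definition phi_term :: "real \<Rightarrow> nat \<Rightarrow> real" where
  "phi_term x m = real (digit m x) / real (weight (Suc m))"

definition phi :: "real \<Rightarrow> real" where
  "phi x = (\<Sum>m. phi_term x m)"

text \<open>\<open>weight k\<close> is the number of selected cells of level \<open>k\<close>; it grows at least like \<open>2^k\<close> and
  equals \<open>grid k / 8^k\<close>.\<close>
lemma weight_Suc: "weight (Suc k) = weight k * quota k"
  by (simp add: weight_def)

lemma weight_pos: "weight k > 0"
  unfolding weight_def using quota_ge_32 by (intro prod_pos) (metis less_le_trans zero_less_numeral)

lemma weight_ge_1: "real (weight k) \<ge> 1"
  using weight_pos[of k] by (simp add: Suc_le_eq)

lemma weight_geometric: "real (weight (j + k)) \<ge> 2^j * real (weight k)"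
proof (induction j)
  case (Suc j)
  have "real (weight (Suc j + k)) = real (weight (j + k)) * real (quota (j + k))" by (simp add: weight_Suc)
  also have "\<dots> \<ge> real (weight (j + k)) * 2" using quota_ge_32[of "j + k"] by (intro mult_left_mono) auto
  finally show ?case using Suc by simp
qed simp

lemma grid_eq_weight: "real (grid k) = 8^k * real (weight k)"
proof (induction k)
  case 0 then show ?case by (simp add: grid_def grid_exp_def weight_def)
next
  case (Suc k)
  then show ?case using branch_eq_8_quota[of k] by (simp add: grid_Suc weight_Suc)
qed

lemma selected_child:
  assumes "x \<in> cantor"
  shows "cell (Suc m) x mod branch m \<in> chosen m (cell m x)" "selected m (cell m x)"
  using assms cell_Suc_div[of x m] by (auto simp: cantor_def dest: spec[of _ "Suc m"])

lemma digit_less_quota: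
  assumes "x \<in> cantor" shows "digit m x < quota m"
proof -
  have pos: "cell (Suc m) x mod branch m \<in> chosen m (cell m x)" and "selected m (cell m x)"
    using selected_child[OF assms] by auto
  then have "finite (chosen m (cell m x))" "card (chosen m (cell m x)) = quota m"
    using selected_chosen by auto
  moreover have "{r \<in> chosen m (cell m x). r < cell (Suc m) x mod branch m} \<subset> chosen m (cell m x)"
    using pos by auto
  ultimately show ?thesis unfolding digit_def by (metis psubset_card_mono)
qed

lemma phi_term_bounds:
  assumes "x \<in> cantor" shows "0 \<le> phi_term x m" "phi_term x m \<le> 1 / real (weight m)"
proof -
  show "0 \<le> phi_term x m" by (simp add: phi_term_def)
  have "real (digit m x) \<le> real (quota m)" using digit_less_quota[OF assms, of m] by simp
  then have "phi_term x m \<le> real (quota m) / real (weight (Suc m))"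
    unfolding phi_term_def by (intro divide_right_mono) auto
  also have "\<dots> = 1 / real (weight m)" using quota_ge_32[of m] by (simp add: weight_Suc)
  finally show "phi_term x m \<le> 1 / real (weight m)" .
qed

lemma phi_term_geometric:
  assumes "x \<in> cantor" shows "phi_term x (j + k) \<le> (1/2)^j / real (weight k)"
proof -
  have "phi_term x (j + k) \<le> 1 / real (weight (j + k))" by (rule phi_term_bounds(2)[OF assms])
  also have "\<dots> \<le> 1 / (2^j * real (weight k))"
  proof (rule divide_left_mono)
    show "0 < real (weight (j + k)) * (2^j * real (weight k))"
      using weight_ge_1[of "j + k"] weight_ge_1[of k] by simp
  qed (use weight_geometric[of j k] in auto)
  finally show ?thesis by (simp add: power_one_over)
qed

lemma phi_tail:
  assumes "x \<in> cantor"
  shows "summable (\<lambda>j. phi_term x (j + k))" "0 \<le> (\<Sum>j. phi_term x (j + k))"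
    "(\<Sum>j. phi_term x (j + k)) \<le> 2 / real (weight k)"
proof -
  have geom: "summable (\<lambda>j. (1/2::real)^j / real (weight k))"
    by (intro summable_divide summable_geometric) simp
  show sum: "summable (\<lambda>j. phi_term x (j + k))"
    by (rule summable_comparison_test[OF _ geom])
       (use phi_term_geometric[OF assms] phi_term_bounds(1)[OF assms] in auto)
  show "0 \<le> (\<Sum>j. phi_term x (j + k))"
    by (rule suminf_nonneg[OF sum]) (use phi_term_bounds(1)[OF assms] in auto)
  have "(\<Sum>j. phi_term x (j + k)) \<le> (\<Sum>j. (1/2::real)^j / real (weight k))"
    by (rule suminf_le[OF _ sum geom]) (use phi_term_geometric[OF assms] in auto)
  also have "\<dots> = 2 / real (weight k)"
    using suminf_divide[of "\<lambda>j. (1/2::real)^j" "real (weight k)"] suminf_geometric[of "1/2::real"]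
    by (simp add: summable_geometric)
  finally show "(\<Sum>j. phi_term x (j + k)) \<le> 2 / real (weight k)" .
qed

lemma phi_diff:
  assumes x: "x \<in> cantor" and y: "y \<in> cantor" and same: "\<forall>j\<le>k. cell j x = cell j y"
  shows "\<bar>phi x - phi y\<bar> \<le> (\<bar>real (cell (Suc k) x) - real (cell (Suc k) y)\<bar> + 2) / real (weight (Suc k))"
proof -
  have "x \<ge> 0" "y \<ge> 0" using x y by (auto simp: cantor_def)
  have head: "(\<Sum>i<k. phi_term x i) = (\<Sum>i<k. phi_term y i)"
    using same by (intro sum.cong) (auto simp: phi_term_def digit_def Suc_le_eq)
  define p where "p = cell k x"
  have "finite (chosen k p)" using selected_child[OF x] selected_chosen by (auto simp: p_def)
  then have "\<bar>real (digit k x) - real (digit k y)\<bar> \<le>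
      \<bar>real (cell (Suc k) x mod branch k) - real (cell (Suc k) y mod branch k)\<bar>"
    using card_below_diff same by (simp add: digit_def p_def)
  also have "\<dots> = \<bar>real (cell (Suc k) x) - real (cell (Suc k) y)\<bar>"
    using cell_Suc[OF \<open>x \<ge> 0\<close>, of k] cell_Suc[OF \<open>y \<ge> 0\<close>, of k] same by (smt (verit) of_nat_add le_refl)
  finally have digit_diff: "\<bar>real (digit k x) - real (digit k y)\<bar> \<le> \<bar>real (cell (Suc k) x) - real (cell (Suc k) y)\<bar>" .
  have "\<bar>phi_term x k - phi_term y k\<bar> = \<bar>real (digit k x) - real (digit k y)\<bar> / real (weight (Suc k))"
    using weight_ge_1[of "Suc k"] by (simp add: phi_term_def abs_divide flip: diff_divide_distrib)
  also have "\<dots> \<le> \<bar>real (cell (Suc k) x) - real (cell (Suc k) y)\<bar> / real (weight (Suc k))"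
    by (rule divide_right_mono[OF digit_diff]) simp
  finally have "\<bar>phi_term x k - phi_term y k\<bar> \<le> \<bar>real (cell (Suc k) x) - real (cell (Suc k) y)\<bar> / real (weight (Suc k))" .
  moreover have "phi z = (\<Sum>j. phi_term z (j + Suc k)) + phi_term z k + (\<Sum>i<k. phi_term z i)"
    if "z \<in> cantor" for z
    using suminf_split_initial_segment[OF phi_tail(1)[OF that, of 0, simplified], of "Suc k"]
    by (simp add: phi_def)
  ultimately show ?thesis
    using phi_tail(2,3)[OF x, of "Suc k"] phi_tail(2,3)[OF y, of "Suc k"] head x y
    by (simp add: add_divide_distrib)
qed

text \<open>Distinct selected children of a cell are separated by a gap, since their indices are even.\<close>
lemma selected_child_even:
  assumes "x \<in> cantor" shows "even (cell (Suc m) x mod branch m)"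
  using selected_child[OF assms] selected_chosen[of m "cell m x"] by auto

text \<open>Points of the Cantor set at distance less than \<open>1 / grid k\<close> have the same cells up to level \<open>k\<close>:
  otherwise two distinct even-indexed children would be at index distance less than 2.\<close>
lemma same_cells:
  assumes x: "x \<in> cantor" and y: "y \<in> cantor" and close: "\<bar>x - y\<bar> < 1 / real (grid k)"
  shows "j \<le> k \<Longrightarrow> cell j x = cell j y"
proof (induction j)
  case 0
  then show ?case using x y cell_0 by (auto simp: cantor_def)
next
  case (Suc j)
  have "x \<ge> 0" "y \<ge> 0" using x y by (auto simp: cantor_def)
  have "\<bar>x * grid (Suc j) - y * grid (Suc j)\<bar> = \<bar>x - y\<bar> * grid (Suc j)"
    by (simp add: left_diff_distrib[symmetric] abs_mult)
  also have "\<dots> \<le> \<bar>x - y\<bar> * grid k" using grid_mono[OF Suc.prems] by (intro mult_left_mono) auto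
  also have "\<dots> < 1" using close grid_pos[of k] by (simp add: field_simps)
  finally have "\<bar>real (cell (Suc j) x) - real (cell (Suc j) y)\<bar> < 2"
    using nat_floor_diff_lt[of "x * grid (Suc j)" "y * grid (Suc j)"] \<open>x \<ge> 0\<close> \<open>y \<ge> 0\<close>
    by (simp add: cell_def)
  moreover have "cell j x = cell j y" using Suc by simp
  ultimately have "\<bar>real (cell (Suc j) x mod branch j) - real (cell (Suc j) y mod branch j)\<bar> < 2"
    using cell_Suc[OF \<open>x \<ge> 0\<close>, of j] cell_Suc[OF \<open>y \<ge> 0\<close>, of j] by (smt (verit) of_nat_add)
  then have "cell (Suc j) x mod branch j = cell (Suc j) y mod branch j"
    using selected_child_even[OF x, of j] selected_child_even[OF y, of j] by (rule even_close_eq)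
  then show ?case using cell_Suc[OF \<open>x \<ge> 0\<close>, of j] cell_Suc[OF \<open>y \<ge> 0\<close>, of j] \<open>cell j x = cell j y\<close>
    by simp
qed

lemma phi_diff_at_scale:
  assumes x: "x \<in> cantor" and y: "y \<in> cantor"
    and scale: "1 / real (grid (Suc k)) \<le> \<bar>x - y\<bar>" "\<bar>x - y\<bar> < 1 / real (grid k)"
  shows "\<bar>phi x - phi y\<bar> \<le> 4 * 8^(Suc k) * \<bar>x - y\<bar>"
proof -
  define d where "d = \<bar>x - y\<bar>"
  have "x \<ge> 0" "y \<ge> 0" using x y by (auto simp: cantor_def)
  have grid_pos': "real (grid (Suc k)) > 0" using grid_pos[of "Suc k"] by simp
  have "\<bar>real (cell (Suc k) x) - real (cell (Suc k) y)\<bar> < \<bar>x * grid (Suc k) - y * grid (Suc k)\<bar> + 1"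
    unfolding cell_def by (rule nat_floor_diff_lt) (use \<open>x \<ge> 0\<close> \<open>y \<ge> 0\<close> in auto)
  also have "\<bar>x * grid (Suc k) - y * grid (Suc k)\<bar> = d * grid (Suc k)"
    by (simp add: d_def left_diff_distrib[symmetric] abs_mult)
  finally have cells: "\<bar>real (cell (Suc k) x) - real (cell (Suc k) y)\<bar> + 2 \<le> 4 * (d * grid (Suc k))"
    using scale(1) grid_pos' by (simp add: d_def field_simps)
  have "\<bar>phi x - phi y\<bar> \<le> (\<bar>real (cell (Suc k) x) - real (cell (Suc k) y)\<bar> + 2) / real (weight (Suc k))"
    using phi_diff[OF x y] same_cells[OF x y scale(2)] by blast
  also have "\<dots> \<le> 4 * (d * grid (Suc k)) / real (weight (Suc k))"
    using cells weight_ge_1[of "Suc k"] by (intro divide_right_mono) auto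
  also have "\<dots> = 4 * 8^(Suc k) * d"
    using weight_ge_1[of "Suc k"] by (simp add: grid_eq_weight[of "Suc k"])
  finally show ?thesis by (simp add: d_def)
qed

lemma distance_scale:
  assumes "0 < d" "d < 1 / real (grid k0)"
  obtains k where "k \<ge> k0" "1 / real (grid (Suc k)) \<le> d" "d < 1 / real (grid k)"
proof -
  have ex: "1 / real (grid j) \<le> d" if "j \<ge> 1 / d" for j
  proof -
    have "1 / d < real (grid j)" using grid_gt[of j] that by linarith
    then show ?thesis using assms(1) grid_pos[of j] by (simp add: field_simps)
  qed
  define m where "m = (LEAST j. 1 / real (grid j) \<le> d)"
  have m: "1 / real (grid m) \<le> d"
    unfolding m_def by (rule LeastI[of _ "nat \<lceil>1 / d\<rceil>"]) (rule ex, linarith)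
  have below: "d < 1 / real (grid j)" if "j < m" for j
    using not_less_Least[of j "\<lambda>j. 1 / real (grid j) \<le> d"] that by (simp add: m_def)
  have "m > k0"
  proof (rule ccontr)
    assume "\<not> m > k0"
    then have "real (grid m) \<le> real (grid k0)" using grid_mono by simp
    then have "1 / real (grid k0) \<le> 1 / real (grid m)" using grid_pos[of m] by (simp add: frac_le)
    then show False using m assms(2) by linarith
  qed
  then obtain k where "m = Suc k" "k \<ge> k0" by (cases m) auto
  then show ?thesis using that m below[of k] by simp
qed

text \<open>The expansion factor \<open>4 * 8^(k+1)\<close> is eventually beaten by \<open>(1 / grid k) powr (1 - s)\<close>,
  since \<open>grid k\<close> grows doubly exponentially.\<close>
lemma eventually_scale_factor_le_1:
  assumes "s < 1"
  shows "eventually (\<lambda>k. 4 * 8^(Suc k) * (1 / real (grid k)) powr (1 - s) \<le> 1) sequentially"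
proof -
  have "eventually (\<lambda>k::nat. 3 * real k + 5 \<le> 8 * (1 - s) * (2^k - 1)) sequentially"
    using assms by real_asymp
  then show ?thesis
  proof (rule eventually_mono)
    fix k assume k: "3 * real k + 5 \<le> 8 * (1 - s) * (2^k - 1)"
    have "(1 - s) * (8 * (2^k - 1)) \<le> (1 - s) * real (grid_exp k)"
      using grid_exp_lower[of k] assms by (intro mult_left_mono) auto
    then have exponent: "3 * real k + 5 \<le> (1 - s) * real (grid_exp k)" using k by (simp add: algebra_simps)
    have "real (grid k) = 2 powr real (grid_exp k)" by (simp add: grid_def powr_realpow)
    then have "1 / real (grid k) = 2 powr (- real (grid_exp k))" by (simp add: powr_minus divide_inverse)
    then have "(1 / real (grid k)) powr (1 - s) = 2 powr (- ((1 - s) * real (grid_exp k)))"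
      by (simp add: powr_powr mult.commute)
    moreover have "4 * 8^(Suc k) = (2::real) powr (3 * real k + 5)"
    proof -
      have "(2::real) powr (3 * real k + 5) = 2 ^ (3 * k + 5)"
        by (metis of_nat_add of_nat_mult of_nat_numeral powr_realpow zero_less_numeral)
      then show ?thesis by (simp add: power_add power_mult)
    qed
    ultimately have "4 * 8^(Suc k) * (1 / real (grid k)) powr (1 - s)
        = 2 powr (3 * real k + 5 - (1 - s) * real (grid_exp k))"
      by (simp add: powr_add[symmetric])
    also have "\<dots> \<le> 2 powr 0" using exponent by (intro powr_mono) auto
    finally show "4 * 8^(Suc k) * (1 / real (grid k)) powr (1 - s) \<le> 1" by simp
  qed
qed

lemma phi_holder:
  assumes "0 < s" "s < 1"
  obtains \<rho> where "\<rho> > 0"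
    "\<And>x y. x \<in> cantor \<Longrightarrow> y \<in> cantor \<Longrightarrow> \<bar>x - y\<bar> < \<rho> \<Longrightarrow> \<bar>phi x - phi y\<bar> \<le> \<bar>x - y\<bar> powr s"
proof -
  obtain k0 where k0: "\<And>k. k \<ge> k0 \<Longrightarrow> 4 * 8^(Suc k) * (1 / real (grid k)) powr (1 - s) \<le> 1"
    using eventually_scale_factor_le_1[OF assms(2)] by (auto simp: eventually_sequentially)
  have "\<bar>phi x - phi y\<bar> \<le> \<bar>x - y\<bar> powr s"
    if x: "x \<in> cantor" and y: "y \<in> cantor" and close: "\<bar>x - y\<bar> < 1 / real (grid k0)" for x y
  proof (cases "x = y")
    case False
    define d where "d = \<bar>x - y\<bar>"
    have "d > 0" using False by (simp add: d_def)
    obtain k where k: "k \<ge> k0" "1 / real (grid (Suc k)) \<le> d" "d < 1 / real (grid k)"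
      using distance_scale[OF \<open>d > 0\<close> close[folded d_def]] by blast
    have "\<bar>phi x - phi y\<bar> \<le> 4 * 8^(Suc k) * d" using phi_diff_at_scale[OF x y] k by (simp add: d_def)
    also have "\<dots> = 4 * 8^(Suc k) * d powr (1 - s) * d powr s"
      using \<open>d > 0\<close> by (simp add: powr_add[symmetric])
    also have "\<dots> \<le> 4 * 8^(Suc k) * (1 / real (grid k)) powr (1 - s) * d powr s"
      using k(3) \<open>d > 0\<close> assms by (intro mult_right_mono mult_left_mono powr_mono2) auto
    also have "\<dots> \<le> d powr s" using k0[OF k(1)] by (intro mult_left_le_one_le) auto
    finally show ?thesis by (simp add: d_def)
  qed simp
  moreover have "1 / real (grid k0) > 0" using grid_pos[of k0] by simp
  ultimately show ?thesis using that by blast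
qed

subsection \<open>Surjectivity of \<open>phi\<close>\<close>

text \<open>Surjectivity of \<open>phi\<close> onto \<open>[0, 1)\<close>: expand \<open>z\<close> in the mixed radix \<open>quota 0, quota 1, ...\<close>;
  the digits prescribe, level by level, which chosen child to descend into, and the nested cells so
  obtained shrink to a point of the Cantor set with image \<open>z\<close>.\<close>
definition z_digit :: "real \<Rightarrow> nat \<Rightarrow> nat" where
  "z_digit z m = nat \<lfloor>z * real (weight (Suc m))\<rfloor> mod quota m"

definition child_of_rank :: "nat \<Rightarrow> nat \<Rightarrow> nat \<Rightarrow> nat" where
  "child_of_rank m i d = sorted_list_of_set (chosen m i) ! d"

primrec pre_cell :: "real \<Rightarrow> nat \<Rightarrow> nat" where
  "pre_cell z 0 = 0"
| "pre_cell z (Suc m) = pre_cell z m * branch m + child_of_rank m (pre_cell z m) (z_digit z m)"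

lemma z_digit_less: "z_digit z m < quota m"
  using quota_ge_32[of m] by (simp add: z_digit_def)

lemma z_digit_sums:
  assumes "0 \<le> z" "z < 1"
  shows "(\<lambda>m. real (z_digit z m) / real (weight (Suc m))) sums z"
proof -
  define num where "num m = nat \<lfloor>z * real (weight m)\<rfloor>" for m
  have num_Suc: "num (Suc m) = num m * quota m + z_digit z m" for m
  proof -
    have "num (Suc m) div quota m = num m"
      using nat_floor_mult_div[of "z * real (weight m)" "quota m"] assms quota_ge_32[of m]
      by (simp add: num_def weight_Suc mult.assoc)
    then show ?thesis by (metis div_mult_mod_eq num_def z_digit_def)
  qed
  have partial: "(\<Sum>m<n. real (z_digit z m) / real (weight (Suc m))) = real (num n) / real (weight n)" for n
  proof (induction n)
    case 0 then show ?case using assms by (simp add: num_def weight_def)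
  next
    case (Suc n)
    have "real (weight n) > 0" "real (quota n) > 0" using weight_ge_1[of n] quota_ge_32[of n] by auto
    then show ?case using Suc by (simp add: num_Suc weight_Suc field_simps)
  qed
  have approx: "z - (1/2)^n \<le> real (num n) / real (weight n) \<and> real (num n) / real (weight n) \<le> z" for n
  proof
    have w: "real (weight n) > 0" "real (weight n) \<ge> 2^n"
      using weight_ge_1[of n] weight_geometric[of n 0] by (simp_all add: weight_def)
    have num: "real (num n) \<le> z * real (weight n)" "z * real (weight n) < real (num n) + 1"
      using nat_floor_bounds[of "z * real (weight n)"] assms w(1) by (simp_all add: num_def)
    have "1 / real (weight n) \<le> 1 / 2^n" using w by (intro divide_left_mono) auto
    moreover have "z < real (num n) / real (weight n) + 1 / real (weight n)"
      using num(2) w(1) by (simp add: field_simps)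
    ultimately show "z - (1/2)^n \<le> real (num n) / real (weight n)" by (simp add: power_one_over)
    show "real (num n) / real (weight n) \<le> z" using num(1) w(1) by (simp add: divide_le_eq)
  qed
  have "(\<lambda>n. real (num n) / real (weight n)) \<longlonglongrightarrow> z"
  proof (rule tendsto_sandwich[of "\<lambda>n. z - (1/2)^n" _ _ "\<lambda>n. z"])
    have "(\<lambda>n. z - (1/2::real)^n) \<longlonglongrightarrow> z - 0" by (intro tendsto_intros) simp
    then show "(\<lambda>n. z - (1/2::real)^n) \<longlonglongrightarrow> z" by simp
  qed (use approx in auto)
  then show ?thesis unfolding sums_def partial .
qed

lemma child_of_rank_chosen:
  assumes "selected m i" "d < quota m"
  shows "child_of_rank m i d \<in> chosen m i"
    and "card {r \<in> chosen m i. r < child_of_rank m i d} = d"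
proof -
  have fin: "finite (chosen m i)" and card: "card (chosen m i) = quota m" using selected_chosen[OF assms(1)] by auto
  show "child_of_rank m i d \<in> chosen m i"
    using nth_mem[of d "sorted_list_of_set (chosen m i)"] fin card assms(2) by (simp add: child_of_rank_def)
  show "card {r \<in> chosen m i. r < child_of_rank m i d} = d"
    unfolding child_of_rank_def by (rule card_below_nth_sorted) (use fin card assms(2) in auto)
qed

lemma selected_pre_cell: "selected m (pre_cell z m)"
proof (induction m)
  case (Suc m)
  have "child_of_rank m (pre_cell z m) (z_digit z m) \<in> chosen m (pre_cell z m)"
    using child_of_rank_chosen(1)[OF Suc z_digit_less] .
  moreover have "chosen m (pre_cell z m) \<subseteq> {r. r < branch m \<and> even r}" using selected_chosen[OF Suc] by blast
  ultimately show ?case using Suc by auto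
qed simp

text \<open>The chosen child is even and below the even number \<open>branch m\<close>, so it leaves room for a gap.\<close>
lemma child_of_rank_room: "child_of_rank m (pre_cell z m) (z_digit z m) + 2 \<le> branch m"
proof -
  let ?c = "child_of_rank m (pre_cell z m) (z_digit z m)"
  have "?c < branch m" "even ?c"
    using child_of_rank_chosen(1)[OF selected_pre_cell z_digit_less] selected_chosen[OF selected_pre_cell]
    by blast+
  moreover have "even (branch m)" using branch_eq_8_quota[of m] by simp
  ultimately show ?thesis by (elim evenE) presburger
qed

text \<open>The upper end stays a whole cell of
  level \<open>m + 1\<close> below the end of the cell \<open>pre_cell z m\<close>, which is possible because every chosen
  child is followed by an unchosen sibling; their supremum is the point \<open>preimage z\<close>.\<close>
definition pre_lo :: "real \<Rightarrow> nat \<Rightarrow> real" where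
  "pre_lo z m = real (pre_cell z m) / real (grid m)"

definition pre_hi :: "real \<Rightarrow> nat \<Rightarrow> real" where
  "pre_hi z m = (real (pre_cell z m) + 1) / real (grid m) - 1 / real (grid (Suc m))"

definition preimage :: "real \<Rightarrow> real" where
  "preimage z = (SUP m. pre_lo z m)"

lemma pre_lo_mono: "pre_lo z m \<le> pre_lo z (Suc m)"
proof -
  have pos: "real (grid m) > 0" "real (branch m) > 0" using grid_pos[of m] branch_ge_256[of m] by auto
  have "pre_lo z m = real (pre_cell z m * branch m) / real (grid (Suc m))"
    using pos by (simp add: pre_lo_def grid_Suc)
  also have "\<dots> \<le> real (pre_cell z (Suc m)) / real (grid (Suc m))"
    by (rule divide_right_mono) simp_all
  also have "\<dots> = pre_lo z (Suc m)" by (simp add: pre_lo_def)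
  finally show ?thesis .
qed

lemma pre_hi_antimono: "pre_hi z (Suc m) \<le> pre_hi z m"
proof -
  have pos: "real (grid m) > 0" "real (branch m) > 0" "real (grid (Suc (Suc m))) > 0"
    using grid_pos[of m] branch_ge_256[of m] grid_pos[of "Suc (Suc m)"] by auto
  have "pre_hi z (Suc m) \<le> (real (pre_cell z (Suc m)) + 1) / real (grid (Suc m))"
    using pos by (simp add: pre_hi_def)
  also have "\<dots> \<le> (real (pre_cell z m * branch m) + real (branch m) - 1) / real (grid (Suc m))"
    using child_of_rank_room[of m z] pos by (intro divide_right_mono) auto
  also have "\<dots> = pre_hi z m" using pos by (simp add: pre_hi_def grid_Suc field_simps)
  finally show ?thesis .
qed

lemma pre_lo_le_pre_hi: "pre_lo z j \<le> pre_hi z m"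
proof -
  have lo_hi: "pre_lo z m \<le> pre_hi z m" for m
    using grid_mono[of m "Suc m"] grid_pos[of m] by (simp add: pre_lo_def pre_hi_def add_divide_distrib frac_le)
  show ?thesis
  proof (cases "j \<le> m")
    case True
    then show ?thesis using lift_Suc_mono_le[of "pre_lo z", OF pre_lo_mono True] lo_hi[of m] by linarith
  next
    case False
    then show ?thesis using lift_Suc_antimono_le[of "pre_hi z", OF pre_hi_antimono, of m j] lo_hi[of j] by simp
  qed
qed

lemma preimage_bounds: "pre_lo z m \<le> preimage z" "preimage z \<le> pre_hi z m"
proof -
  have "bdd_above (range (pre_lo z))" by (rule bdd_aboveI[of _ "pre_hi z 0"]) (auto intro: pre_lo_le_pre_hi)
  then show "pre_lo z m \<le> preimage z" unfolding preimage_def by (intro cSUP_upper) simp_all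
  show "preimage z \<le> pre_hi z m" unfolding preimage_def by (intro cSUP_least) (auto intro: pre_lo_le_pre_hi)
qed

lemma cell_preimage: "cell m (preimage z) = pre_cell z m"
proof -
  have pos: "real (grid m) > 0" "real (grid (Suc m)) > 0" using grid_pos[of m] grid_pos[of "Suc m"] by auto
  have lower: "real (pre_cell z m) \<le> preimage z * real (grid m)"
    using preimage_bounds(1)[of z m] pos by (simp add: pre_lo_def field_simps)
  have "1 / real (grid (Suc m)) > 0" using pos by simp
  then have "preimage z < (real (pre_cell z m) + 1) / real (grid m)"
    using preimage_bounds(2)[of z m] unfolding pre_hi_def by linarith
  then have upper: "preimage z * real (grid m) < real (pre_cell z m) + 1" using pos by (simp add: field_simps)
  show ?thesis unfolding cell_def using lower upper by (rule nat_floor_eqI)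
qed

lemma preimage_in_cantor: "preimage z \<in> cantor"
proof -
  have "0 \<le> preimage z" using preimage_bounds(1)[of z 0] by (simp add: pre_lo_def)
  moreover have "preimage z < 1"
  proof -
    have "pre_hi z 0 = 1 - 1 / real (grid 1)" by (simp add: pre_hi_def grid_def grid_exp_def)
    moreover have "1 / real (grid 1) > 0" using grid_pos[of 1] by simp
    ultimately show ?thesis using preimage_bounds(2)[of z 0] by linarith
  qed
  ultimately show ?thesis using selected_pre_cell by (simp add: cantor_def cell_preimage)
qed

lemma digit_preimage: "digit m (preimage z) = z_digit z m"
proof -
  have "cell (Suc m) (preimage z) mod branch m = child_of_rank m (pre_cell z m) (z_digit z m)"
    using child_of_rank_room[of m z] by (simp add: cell_preimage)
  then show ?thesis
    using child_of_rank_chosen(2)[OF selected_pre_cell z_digit_less] by (simp add: digit_def cell_preimage)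
qed

lemma phi_onto: "{0..<1} \<subseteq> phi ` cantor"
proof
  fix z :: real assume "z \<in> {0..<1}"
  then have "(\<lambda>m. phi_term (preimage z) m) sums z"
    using z_digit_sums[of z] by (simp add: phi_term_def digit_preimage)
  then have "phi (preimage z) = z" unfolding phi_def by (rule sums_unique[symmetric])
  then show "z \<in> phi ` cantor" using preimage_in_cantor by (metis image_eqI)
qed

subsection \<open>The target set is large in every dimension \<open>s < 1\<close>\<close>

lemma hausdorff_measure_target_nonzero:
  assumes "0 < s" "s < 1"
  shows "hausdorff_measure s target \<noteq> 0"
proof -
  obtain \<rho> where "\<rho> > 0" and holder:
      "\<And>x y. x \<in> cantor \<Longrightarrow> y \<in> cantor \<Longrightarrow> \<bar>x - y\<bar> < \<rho> \<Longrightarrow> \<bar>phi x - phi y\<bar> \<le> \<bar>x - y\<bar> powr s"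
    using phi_holder[OF assms] by blast
  have "ennreal (1/2) \<le> hausdorff_measure s target"
    using hausdorff_measure_ge_half_if_holder_onto[OF \<open>0 < s\<close> \<open>\<rho> > 0\<close> cantor_subset_target phi_onto]
      holder by blast
  then show ?thesis by auto
qed

end

text \<open>Choice of the parameters: \<open>E\<close> makes the grids fine enough for the blocks, \<open>D\<close> makes the
  blocks long enough, and \<open>a\<close> absorbs the constants \<open>C1\<close> and \<open>C2\<close>.\<close>
lemma construction_exists:
  fixes C1 C2 \<gamma> :: real and t :: "nat \<Rightarrow> real"
  assumes "C1 > 0" and "C2 > 0" and "\<gamma> > 0"
    and "\<forall>n\<ge>1. C1 * real n powr \<gamma> \<le> t n \<and> t n \<le> C2 * real n powr \<gamma>"
  shows "\<exists>E D a. construction t \<gamma> C1 C2 E D a"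
proof -
  define E :: nat where "E = nat \<lceil>2*\<gamma>\<rceil> + 4"
  have E_large: "real E \<ge> 2*\<gamma> + 4" unfolding E_def using assms(3) by linarith
  define D :: nat where "D = nat \<lceil>(real E + 1) / \<gamma>\<rceil> + 2"
  have "real D \<ge> (real E + 1) / \<gamma>" unfolding D_def by linarith
  then have D_gamma: "real D * \<gamma> \<ge> real E + 1" using assms(3) by (simp add: field_simps)
  define K where "K = C2 * 768 * ln (2 * real D)"
  have "K > 0" unfolding K_def using assms(2) by (simp add: D_def)
  then have "eventually (\<lambda>x::nat. K * real x \<le> 2^x) sequentially" by real_asymp
  moreover have "eventually (\<lambda>x::nat. 1 \<le> C1 * 2^x) sequentially" using assms(1) by real_asymp
  ultimately have "eventually (\<lambda>x::nat. K * real x \<le> 2^x \<and> 1 \<le> C1 * 2^x) sequentially"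
    by (rule eventually_conj)
  then obtain a0 where a0: "\<And>x. x \<ge> a0 \<Longrightarrow> K * real x \<le> 2^x \<and> 1 \<le> C1 * 2^x"
    unfolding eventually_sequentially by blast
  define a where "a = max a0 2"
  have "D \<ge> 2" "a \<ge> 2" by (simp_all add: D_def a_def)
  moreover have "C1 * 2^a \<ge> 1" using a0[of a] by (simp add: a_def)
  moreover have "\<forall>x\<ge>a. (C2 * 768 * ln (2 * real D)) * real x \<le> 2^x" using a0 by (simp add: a_def K_def)
  ultimately have "construction t \<gamma> C1 C2 E D a"
    using assms E_large D_gamma by (intro construction.intro) simp_all
  then show ?thesis by blast
qed

text \<open>The main theorem, with \<open>n0 = N 1\<close> and the constant \<open>C\<close> of the construction.\<close>
theorem theorem7:
  fixes C1 C2 \<gamma> :: real and t :: "nat \<Rightarrow> real"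
  assumes "C1 > 0" and "C2 > 0" and "\<gamma> > 0"
    and "\<forall>n\<ge>1. C1 * real n powr \<gamma> \<le> t n \<and> t n \<le> C2 * real n powr \<gamma>"
  shows "\<exists>C > 0. \<exists>n0::nat. n0 \<ge> 2 \<and>
           hausdorff_dim (\<Inter>n\<in>{n0..}. {\<xi>::real. dist_int (\<xi> * t n) > C / (real n * ln (real n))}) = 1"
proof -
  obtain E D a where "construction t \<gamma> C1 C2 E D a" using construction_exists[OF assms] by blast
  then interpret construction t \<gamma> C1 C2 E D a .
  have "hausdorff_dim target = 1"
    by (rule hausdorff_dim_eq_1) (rule hausdorff_measure_target_nonzero)
  moreover have "C > 0" "N 1 \<ge> 2" using C_pos N_ge_4[of 1] by auto
  ultimately show ?thesis unfolding target_def by blast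
qed

end
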